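(* Let $\Gamma$ be a countable group and all spaces below measure preserving $\Gamma$-actions. (1) If $(X,\mu)\xhookrightarrow{proj}(Y,\nu)\xhookrightarrow{proj}(Z,\tau)$ then $(X,\mu)\xhookrightarrow{proj}(Z,\tau)$. (2) If $(X,\mu)\xhookrightarrow{inf}(Y,\nu)\xhookrightarrow{proj}(Z,\tau)$ then $(X,\mu)\xhookrightarrow{inf}(Z,\tau)$. (3) If $(X,\mu)\xhookrightarrow{w}(Y,\nu)\xhookrightarrow{inf}(Z,\tau)$ then $(X,\mu)\xhookrightarrow{inf}(Z,\tau)$. (4) If $(X,\mu)$ is ergodic with $\mu(X)=\infty$, $(Y,\nu)$ is probability measure preserving, and $(X,\mu)\xhookrightarrow{proj}(Y,\nu)\xhookrightarrow{inf}(Z,\tau)$, then $(X,\mu)\xhookrightarrow{proj}(Z,\tau)$. (5) If $(X_1,\mu_1)\xhookrightarrow{proj}(Y_1,\nu_1)$ and $(X_2,\mu_2)\xhookrightarrow{proj}(Y_2,\nu_2)$, then $(X_1\times X_2,\mu_1\times\mu_2)\xhookrightarrow{proj}(Y_1\times Y_2,\nu_1\times\nu_2)$ (diagonal actions).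
   Context: A measure preserving action $(X,\mu)$ of a countable group $\Gamma$ is an action on a standard Borel space preserving a $\sigma$-finite measure. Weak containment $\xhookrightarrow{w}$: for every finite $F\subset\Gamma$, $k\in\mathbb N$, finite measure $A_1,\dots,A_k\subset X$ and $\varepsilon>0$ there exist $B_1,\dots,B_k\subset Y$ with $|\mu(A_i\cap\gamma A_j)-\nu(B_i\cap\gamma B_j)|\le\varepsilon\max_l\mu(A_l)$ for all $i,j$, $\gamma\in F$. Projective containment $\xhookrightarrow{proj}$: the same but with some $\lambda>0$ and $\lambda\nu(B_i\cap\gamma B_j)$ in place of $\nu(B_i\cap\gamma B_j)$. Infinitesimal containment $\xhookrightarrow{inf}$: for every finite $F$, $k$, $\varepsilon>0$ there is $\delta>0$ such that for all positive measure $A_1,\dots,A_k\subset X$ with $\mu(A_i)\le\delta$ there exist $\lambda>0$ and $B_1,\dots,B_k\subset Y$ with $|\mu(A_i\cap\gamma A_j)-\lambda\nu(B_i\cap\gamma B_j)|\le\varepsilon\max_l\mu(A_l)$ for all $i,j$, $\gamma\in F$. *)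

theory Defs
  imports "HOL-Probability.Probability"
begin

text \<open>The countable group \<Gamma> is a type of class group_add (written additively,
  not necessarily abelian) and countable.  A space is a Polish type with a measure
  on its Borel sets (standard Borel space), the action is a family of maps.\<close>

definition mp_action ::
  "('g::{group_add,countable} \<Rightarrow> 'x \<Rightarrow> 'x) \<Rightarrow> ('x::polish_space) measure \<Rightarrow> bool" where
  "mp_action a M \<longleftrightarrow>
     sets M = sets (borel :: 'x measure) \<and>
     sigma_finite_measure M \<and>
     a 0 = id \<and>
     (\<forall>g h. a (g + h) = a g \<circ> a h) \<and>
     (\<forall>g. a g \<in> M \<rightarrow>\<^sub>M M \<and>
          (\<forall>A \<in> sets M. emeasure M (a g -` A \<inter> space M) = emeasure M A))"

definition fin_sets :: "'x measure \<Rightarrow> 'x set set" where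
  "fin_sets M = {A \<in> sets M. emeasure M A < \<infinity>}"

definition maxmeas :: "'x measure \<Rightarrow> nat \<Rightarrow> (nat \<Rightarrow> 'x set) \<Rightarrow> real" where
  "maxmeas M k A = Max ((\<lambda>l. measure M (A l)) ` {..<k})"

definition weakly_contained ::
  "('g \<Rightarrow> 'x \<Rightarrow> 'x) \<Rightarrow> 'x measure \<Rightarrow> ('g \<Rightarrow> 'y \<Rightarrow> 'y) \<Rightarrow> 'y measure \<Rightarrow> bool" where
  "weakly_contained a M b N \<longleftrightarrow>
     (\<forall>F k A \<epsilon>. finite F \<longrightarrow> (\<forall>i<k. A i \<in> fin_sets M) \<longrightarrow> \<epsilon> > 0 \<longrightarrow>
        (\<exists>B. (\<forall>i<k. B i \<in> fin_sets N) \<and>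
           (\<forall>i<k. \<forall>j<k. \<forall>\<gamma>\<in>F.
              \<bar>measure M (A i \<inter> a \<gamma> ` A j) - measure N (B i \<inter> b \<gamma> ` B j)\<bar>
                \<le> \<epsilon> * maxmeas M k A)))"

definition proj_contained ::
  "('g \<Rightarrow> 'x \<Rightarrow> 'x) \<Rightarrow> 'x measure \<Rightarrow> ('g \<Rightarrow> 'y \<Rightarrow> 'y) \<Rightarrow> 'y measure \<Rightarrow> bool" where
  "proj_contained a M b N \<longleftrightarrow>
     (\<forall>F k A \<epsilon>. finite F \<longrightarrow> (\<forall>i<k. A i \<in> fin_sets M) \<longrightarrow> \<epsilon> > 0 \<longrightarrow>
        (\<exists>lam::real. \<exists>B. lam > 0 \<and> (\<forall>i<k. B i \<in> fin_sets N) \<and>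
           (\<forall>i<k. \<forall>j<k. \<forall>\<gamma>\<in>F.
              \<bar>measure M (A i \<inter> a \<gamma> ` A j) - lam * measure N (B i \<inter> b \<gamma> ` B j)\<bar>
                \<le> \<epsilon> * maxmeas M k A)))"

definition inf_contained ::
  "('g \<Rightarrow> 'x \<Rightarrow> 'x) \<Rightarrow> 'x measure \<Rightarrow> ('g \<Rightarrow> 'y \<Rightarrow> 'y) \<Rightarrow> 'y measure \<Rightarrow> bool" where
  "inf_contained a M b N \<longleftrightarrow>
     (\<forall>F k \<epsilon>. finite F \<longrightarrow> \<epsilon> > 0 \<longrightarrow>
        (\<exists>\<delta>::real. \<delta> > 0 \<and>
          (\<forall>A. (\<forall>i<k. A i \<in> sets M \<and> 0 < emeasure M (A i) \<and> emeasure M (A i) \<le> ennreal \<delta>) \<longrightarrow>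
            (\<exists>lam::real. \<exists>B. lam > 0 \<and> (\<forall>i<k. B i \<in> fin_sets N) \<and>
               (\<forall>i<k. \<forall>j<k. \<forall>\<gamma>\<in>F.
                  \<bar>measure M (A i \<inter> a \<gamma> ` A j) - lam * measure N (B i \<inter> b \<gamma> ` B j)\<bar>
                    \<le> \<epsilon> * maxmeas M k A)))))"

definition ergodic_action :: "('g \<Rightarrow> 'x \<Rightarrow> 'x) \<Rightarrow> 'x measure \<Rightarrow> bool" where
  "ergodic_action a M \<longleftrightarrow>
     (\<forall>A \<in> sets M. (\<forall>g. a g ` A = A) \<longrightarrow>
        emeasure M A = 0 \<or> emeasure M (space M - A) = 0)"

definition diag_action :: "('g \<Rightarrow> 'x \<Rightarrow> 'x) \<Rightarrow> ('g \<Rightarrow> 'y \<Rightarrow> 'y) \<Rightarrow> 'g \<Rightarrow> 'x \<times> 'y \<Rightarrow> 'x \<times> 'y" where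
  "diag_action a b g = (\<lambda>(x, y). (a g x, b g y))"

end

theory Submission
  imports Defs
begin

text \<open>All three containments compare the correlation patterns \<open>\<mu>(A\<^sub>i \<inter> \<gamma>A\<^sub>j)\<close>
  of finite families of sets, up to a scale factor \<open>\<lambda>\<close>.

  (1)--(3): two approximations compose, the scale factors multiply.  The error of the second
  approximation is relative to the sets produced by the first one, whose measures are controlled
  by the diagonal entries (\<open>\<gamma> = 0\<close>).

  (4): in infinite measure a set of huge measure can be added to the family.  Approximating it
  inside a probability space forces \<open>\<lambda>\<close> to be large, hence the approximating sets are
  small; after adjoining a tiny set of positive measure, infinitesimal containment applies.

  (5): by \<open>\<sigma>\<close>-finiteness, finitely many sets of finite product measure are approximated by
  unions of cells \<open>P\<^sub>p \<times> Q\<^sub>q\<close> of one finite grid.  Approximating the sides in each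
  factor by disjoint families, the correlations of unions of cells become sums of products of
  correlations in the factors.\<close>

lemma fin_sets_eq_fmeasurable: "fin_sets M = fmeasurable M"
  unfolding fin_sets_def fmeasurable_def by simp

lemma maxmeas_ge: "i < k \<Longrightarrow> measure M (A i) \<le> maxmeas M k A"
  unfolding maxmeas_def by (rule Max_ge) auto

lemma maxmeas_le: "0 < k \<Longrightarrow> (\<And>i. i < k \<Longrightarrow> measure M (A i) \<le> c) \<Longrightarrow> maxmeas M k A \<le> c"
  unfolding maxmeas_def by (subst Max_le_iff) auto

lemma maxmeas_nonneg: "0 < k \<Longrightarrow> 0 \<le> maxmeas M k A"
  using maxmeas_ge[of 0 k M A] measure_nonneg[of M "A 0"] by linarith

text \<open>\<open>X\<close> need not be measurable: a non-measurable set has measure 0.\<close>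
lemma measure_Int_le: "A \<in> fmeasurable M \<Longrightarrow> measure M (A \<inter> X) \<le> measure M A"
  by (cases "A \<inter> X \<in> sets M") (auto intro: measure_mono_fmeasurable simp: measure_notin_sets)

lemma measure_subset_Un_le:
  assumes "X \<subseteq> Y \<union> Z" "X \<in> sets M" "Y \<in> fmeasurable M" "Z \<in> fmeasurable M"
  shows "measure M X \<le> measure M Y + measure M Z"
proof -
  have "measure M X \<le> measure M (Y \<union> Z)"
    using assms by (intro measure_mono_fmeasurable) auto
  also have "\<dots> \<le> measure M Y + measure M Z"
    using assms by (intro measure_Un_le) auto
  finally show ?thesis .
qed

lemma fmeasurable_sym_diff:
  "A \<in> fmeasurable M \<Longrightarrow> B \<in> fmeasurable M \<Longrightarrow> sym_diff A B \<in> fmeasurable M"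
  by (intro fmeasurable.Un fmeasurable.Diff)

lemma fmeasurable_disjointed:
  assumes "\<forall>p<n. P p \<in> fmeasurable M" "p < n"
  shows "disjointed P p \<in> fmeasurable M"
  unfolding disjointed_def using assms by (intro fmeasurable_Diff sets.finite_UN) (auto intro: fmeasurableD)

lemma fmeasurable_Times:
  assumes "sigma_finite_measure M2" "A \<in> fmeasurable M1" "B \<in> fmeasurable M2"
  shows "A \<times> B \<in> fmeasurable (M1 \<Otimes>\<^sub>M M2)"
proof -
  interpret M2: sigma_finite_measure M2 by fact
  show ?thesis
    using assms(2,3) by (auto simp: fmeasurable_def M2.emeasure_pair_measure_Times ennreal_mult_less_top)
qed

section \<open>Measure-preserving actions\<close>

locale measure_preserving_action = sigma_finite_measure M
  for a :: "'g::group_add \<Rightarrow> 'x \<Rightarrow> 'x" and M :: "'x measure" +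
  assumes space_eq: "space M = UNIV"
    and act_zero: "a 0 = id"
    and act_add: "a (g + h) = a g \<circ> a h"
    and act_measurable: "a g \<in> M \<rightarrow>\<^sub>M M"
    and act_preserves: "A \<in> sets M \<Longrightarrow> emeasure M (a g -` A) = emeasure M A"

lemma mp_action_imp_measure_preserving_action:
  assumes "mp_action a M"
  shows "measure_preserving_action a M"
proof -
  have "space M = UNIV"
    using assms unfolding mp_action_def by (metis sets_eq_imp_space_eq space_borel)
  then show ?thesis
    using assms unfolding mp_action_def measure_preserving_action_def measure_preserving_action_axioms_def
    by auto
qed

context measure_preserving_action
begin

lemma act_inverse: "a g (a (- g) x) = x" "a (- g) (a g x) = x"
  using act_add[of g "- g"] act_add[of "- g" g] act_zero by (metis comp_apply id_apply right_minus left_minus)+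

lemma image_eq_vimage: "a g ` S = a (- g) -` S"
  using act_inverse by (auto simp: image_iff) (metis)

lemma inj_act: "inj (a g)"
  by (metis act_inverse(2) injI)

lemma sets_image: "S \<in> sets M \<Longrightarrow> a g ` S \<in> sets M"
  using measurable_sets[OF act_measurable] by (simp add: image_eq_vimage space_eq)

lemma emeasure_image: "S \<in> sets M \<Longrightarrow> emeasure M (a g ` S) = emeasure M S"
  by (simp add: image_eq_vimage act_preserves)

lemma measure_image: "S \<in> sets M \<Longrightarrow> measure M (a g ` S) = measure M S"
  by (simp add: measure_def emeasure_image)

lemma fmeasurable_image: "S \<in> fmeasurable M \<Longrightarrow> a g ` S \<in> fmeasurable M"
  by (simp add: fmeasurable_def sets_image emeasure_image)

lemma distr_act: "distr M M (a g) = M"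
  by (rule measure_eqI) (simp_all add: emeasure_distr act_measurable act_preserves space_eq)

lemma measure_Int_image_le:
  assumes A: "A \<in> fmeasurable M" "A' \<in> fmeasurable M" and U: "U \<in> fmeasurable M" "U' \<in> fmeasurable M"
  shows "measure M (A \<inter> a g ` A') \<le> measure M (U \<inter> a g ` U') + measure M (A - U) + measure M (A' - U')"
proof -
  have sets: "a g ` A' \<in> sets M" "a g ` U' \<in> sets M" "a g ` (A' - U') \<in> sets M"
    using A U by (auto intro!: sets_image)
  have "measure M (A \<inter> a g ` A') \<le> measure M ((U \<inter> a g ` U') \<union> (A - U) \<union> a g ` (A' - U'))"
    using A U sets by (intro measure_mono_fmeasurable) (auto intro!: fmeasurable_image)
  also have "\<dots> \<le> measure M (U \<inter> a g ` U') + measure M (A - U) + measure M (a g ` (A' - U'))"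
    using A U sets by (intro order.trans[OF measure_Un_le] add_right_mono measure_Un_le) auto
  also have "measure M (a g ` (A' - U')) = measure M (A' - U')"
    using A U by (intro measure_image) auto
  finally show ?thesis .
qed

lemma abs_measure_Int_image_diff_le:
  assumes "A \<in> fmeasurable M" "A' \<in> fmeasurable M" "U \<in> fmeasurable M" "U' \<in> fmeasurable M"
  shows "\<bar>measure M (A \<inter> a g ` A') - measure M (U \<inter> a g ` U')\<bar>
    \<le> measure M (sym_diff A U) + measure M (sym_diff A' U')"
proof -
  have diff_le: "measure M (X - Y) \<le> measure M (sym_diff X Y)" "measure M (Y - X) \<le> measure M (sym_diff X Y)"
    if "X \<in> fmeasurable M" "Y \<in> fmeasurable M" for X Y
    using that by (auto intro!: measure_mono_fmeasurable)
  show ?thesis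
    using measure_Int_image_le[OF assms, of g] measure_Int_image_le[OF assms(3,4,1,2), of g]
      diff_le[OF assms(1,3)] diff_le[OF assms(2,4)]
    by (simp add: abs_le_iff)
qed

end

lemma measure_preserving_action_diag:
  assumes X1: "measure_preserving_action a1 M1" and X2: "measure_preserving_action a2 M2"
  shows "measure_preserving_action (diag_action a1 a2) (M1 \<Otimes>\<^sub>M M2)"
proof -
  interpret X1: measure_preserving_action a1 M1 by (rule X1)
  interpret X2: measure_preserving_action a2 M2 by (rule X2)
  interpret P: pair_sigma_finite M1 M2 ..
  have diag_eq: "diag_action a1 a2 g = (\<lambda>(x, y). (a1 g x, a2 g y))" for g
    by (simp add: diag_action_def)
  have meas: "diag_action a1 a2 g \<in> M1 \<Otimes>\<^sub>M M2 \<rightarrow>\<^sub>M M1 \<Otimes>\<^sub>M M2" for g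
    unfolding diag_eq using X1.act_measurable X2.act_measurable by measurable
  have distr: "distr (M1 \<Otimes>\<^sub>M M2) (M1 \<Otimes>\<^sub>M M2) (diag_action a1 a2 g) = M1 \<Otimes>\<^sub>M M2" for g
    using pair_measure_distr[OF X1.act_measurable X2.act_measurable, of g g]
    by (simp add: X1.distr_act X2.distr_act X2.sigma_finite_measure_axioms diag_eq)
  show ?thesis
  proof unfold_locales
    show "space (M1 \<Otimes>\<^sub>M M2) = UNIV"
      by (simp add: space_pair_measure X1.space_eq X2.space_eq)
    show "diag_action a1 a2 0 = id" "diag_action a1 a2 (g + h) = diag_action a1 a2 g \<circ> diag_action a1 a2 h" for g h
      by (auto simp: diag_action_def X1.act_zero X2.act_zero X1.act_add X2.act_add)
    show "emeasure (M1 \<Otimes>\<^sub>M M2) (diag_action a1 a2 g -` A) = emeasure (M1 \<Otimes>\<^sub>M M2) A"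
      if "A \<in> sets (M1 \<Otimes>\<^sub>M M2)" for g A
      using emeasure_distr[OF meas that, of g] that
      by (simp add: distr space_pair_measure X1.space_eq X2.space_eq)
  qed (fact meas)
qed

section \<open>Correlation patterns\<close>

definition corr :: "('g \<Rightarrow> 'x \<Rightarrow> 'x) \<Rightarrow> 'x measure \<Rightarrow> (nat \<Rightarrow> 'x set) \<Rightarrow> 'g \<Rightarrow> nat \<Rightarrow> nat \<Rightarrow> real" where
  "corr a M A \<gamma> i j = measure M (A i \<inter> a \<gamma> ` A j)"

definition corr_close ::
  "'g set \<Rightarrow> nat \<Rightarrow> real \<Rightarrow> ('g \<Rightarrow> nat \<Rightarrow> nat \<Rightarrow> real) \<Rightarrow> real \<Rightarrow> ('g \<Rightarrow> nat \<Rightarrow> nat \<Rightarrow> real) \<Rightarrow> bool" where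
  "corr_close F k e C lam D \<longleftrightarrow> (\<forall>i<k. \<forall>j<k. \<forall>\<gamma>\<in>F. \<bar>C \<gamma> i j - lam * D \<gamma> i j\<bar> \<le> e)"

definition small_positive_family :: "'x measure \<Rightarrow> real \<Rightarrow> nat \<Rightarrow> (nat \<Rightarrow> 'x set) \<Rightarrow> bool" where
  "small_positive_family M \<delta> k A \<longleftrightarrow>
     (\<forall>i<k. A i \<in> sets M \<and> 0 < emeasure M (A i) \<and> emeasure M (A i) \<le> ennreal \<delta>)"

lemma corr_close_mono:
  "corr_close F k e C lam D \<Longrightarrow> F' \<subseteq> F \<Longrightarrow> e \<le> e' \<Longrightarrow> corr_close F' k e' C lam D"
  unfolding corr_close_def by force

lemma corr_close_measure:
  assumes "corr_close F k e (corr a M A) lam (corr b N B)" "0 \<in> F" "a 0 = id" "b 0 = id" "i < k"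
  shows "\<bar>measure M (A i) - lam * measure N (B i)\<bar> \<le> e"
  using assms unfolding corr_close_def corr_def by fastforce

lemma corr_close_scaled_measure_le:
  assumes "corr_close F k (e * maxmeas M k A) (corr a M A) lam (corr b N B)"
    and "0 \<in> F" "a 0 = id" "b 0 = id" "i < k"
  shows "lam * measure N (B i) \<le> (1 + e) * maxmeas M k A"
  using corr_close_measure[OF assms] maxmeas_ge[OF assms(5), of M A] by (simp add: algebra_simps)

lemma corr_close_trans:
  assumes "corr_close F k e1 C lam1 D" "corr_close F k e2 D lam2 E" "0 \<le> lam1"
  shows "corr_close F k (e1 + lam1 * e2) C (lam1 * lam2) E"
  unfolding corr_close_def
proof (intro allI impI ballI)
  fix i j \<gamma> assume "i < k" "j < k" "\<gamma> \<in> F"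
  then have "\<bar>C \<gamma> i j - lam1 * D \<gamma> i j\<bar> \<le> e1" "\<bar>D \<gamma> i j - lam2 * E \<gamma> i j\<bar> \<le> e2"
    using assms(1,2) unfolding corr_close_def by auto
  moreover have "\<bar>lam1 * D \<gamma> i j - lam1 * lam2 * E \<gamma> i j\<bar> = lam1 * \<bar>D \<gamma> i j - lam2 * E \<gamma> i j\<bar>"
    using assms(3) by (simp add: abs_mult right_diff_distrib[symmetric] mult.assoc)
  ultimately show "\<bar>C \<gamma> i j - lam1 * lam2 * E \<gamma> i j\<bar> \<le> e1 + lam1 * e2"
    using assms(3) mult_left_mono[of _ e2 lam1] by (smt (verit))
qed

lemma proj_containedD:
  assumes "proj_contained a M b N" "finite F" "\<forall>i<k. A i \<in> fin_sets M" "0 < \<epsilon>"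
  obtains lam B where "0 < lam" "\<forall>i<k. B i \<in> fin_sets N"
    "corr_close F k (\<epsilon> * maxmeas M k A) (corr a M A) lam (corr b N B)"
  using assms(1)[unfolded proj_contained_def, rule_format, OF assms(2) _ assms(4), of k A] assms(3) that
  unfolding corr_close_def corr_def by blast

lemma proj_containedI:
  fixes a :: "'g \<Rightarrow> 'x \<Rightarrow> 'x" and b :: "'g \<Rightarrow> 'y \<Rightarrow> 'y"
  assumes "\<And>F k A \<epsilon>. finite F \<Longrightarrow> \<forall>i<k. A i \<in> fin_sets M \<Longrightarrow> 0 < \<epsilon> \<Longrightarrow> 0 < k \<Longrightarrow>
      0 < maxmeas M k A \<Longrightarrow>
      \<exists>lam B. 0 < lam \<and> (\<forall>i<k. B i \<in> fin_sets N) \<and>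
        corr_close F k (\<epsilon> * maxmeas M k A) (corr a M A) lam (corr b N B)"
  shows "proj_contained a M b N"
  unfolding proj_contained_def
proof (intro allI impI)
  fix F :: "'g set" and k and A :: "nat \<Rightarrow> 'x set" and \<epsilon> :: real
  assume F: "finite F" and A: "\<forall>i<k. A i \<in> fin_sets M" and \<epsilon>: "0 < \<epsilon>"
  have "\<exists>lam B. 0 < lam \<and> (\<forall>i<k. B i \<in> fin_sets N) \<and>
      corr_close F k (\<epsilon> * maxmeas M k A) (corr a M A) lam (corr b N B)"
  proof (cases "0 < k \<and> 0 < maxmeas M k A")
    case True
    then show ?thesis using assms[OF F A \<epsilon>] by blast
  next
    case False
    have "corr a M A \<gamma> i j \<le> \<epsilon> * maxmeas M k A" if "i < k" for \<gamma> i j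
    proof -
      have "maxmeas M k A = 0" using False maxmeas_nonneg[of k M A] that by linarith
      have "corr a M A \<gamma> i j \<le> measure M (A i)"
        using measure_Int_le[of "A i" M "a \<gamma> ` A j"] A that by (simp add: corr_def fin_sets_eq_fmeasurable)
      also have "\<dots> \<le> maxmeas M k A" by (rule maxmeas_ge[OF that])
      finally show ?thesis using \<open>maxmeas M k A = 0\<close> by simp
    qed
    then have "corr_close F k (\<epsilon> * maxmeas M k A) (corr a M A) 1 (corr b N (\<lambda>_. {}))"
      by (simp add: corr_close_def corr_def)
    then show ?thesis by (intro exI[of _ "1::real"] exI[of _ "\<lambda>_. {}"]) (simp add: fin_sets_def)
  qed
  then show "\<exists>lam B. lam > 0 \<and> (\<forall>i<k. B i \<in> fin_sets N) \<and> (\<forall>i<k. \<forall>j<k. \<forall>\<gamma>\<in>F.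
      \<bar>measure M (A i \<inter> a \<gamma> ` A j) - lam * measure N (B i \<inter> b \<gamma> ` B j)\<bar> \<le> \<epsilon> * maxmeas M k A)"
    unfolding corr_close_def corr_def .
qed

lemma weakly_containedD:
  assumes "weakly_contained a M b N" "finite F" "\<forall>i<k. A i \<in> fin_sets M" "0 < \<epsilon>"
  obtains B where "\<forall>i<k. B i \<in> fin_sets N"
    "corr_close F k (\<epsilon> * maxmeas M k A) (corr a M A) 1 (corr b N B)"
  using assms(1)[unfolded weakly_contained_def, rule_format, OF assms(2) _ assms(4), of k A] assms(3) that
  unfolding corr_close_def corr_def by auto

lemma inf_containedD:
  assumes "inf_contained a M b N" "finite F" "0 < \<epsilon>"
  shows "\<exists>\<delta>>0. \<forall>A. small_positive_family M \<delta> k A \<longrightarrow> (\<exists>lam B. 0 < lam \<and>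
    (\<forall>i<k. B i \<in> fin_sets N) \<and> corr_close F k (\<epsilon> * maxmeas M k A) (corr a M A) lam (corr b N B))"
  using assms(1)[unfolded inf_contained_def, rule_format, OF assms(2,3), of k]
  unfolding small_positive_family_def corr_close_def corr_def .

lemma inf_containedI:
  fixes a :: "'g \<Rightarrow> 'x \<Rightarrow> 'x" and b :: "'g \<Rightarrow> 'y \<Rightarrow> 'y"
  assumes "\<And>F k \<epsilon>. finite F \<Longrightarrow> 0 < \<epsilon> \<Longrightarrow> 0 < k \<Longrightarrow> \<exists>\<delta>>0. \<forall>A. small_positive_family M \<delta> k A \<longrightarrow>
      (\<exists>lam B. 0 < lam \<and> (\<forall>i<k. B i \<in> fin_sets N) \<and>
         corr_close F k (\<epsilon> * maxmeas M k A) (corr a M A) lam (corr b N B))"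
  shows "inf_contained a M b N"
  unfolding inf_contained_def
proof (intro allI impI)
  fix F :: "'g set" and k :: nat and \<epsilon> :: real
  assume F: "finite F" and \<epsilon>: "0 < \<epsilon>"
  have "\<exists>\<delta>>0. \<forall>A. small_positive_family M \<delta> k A \<longrightarrow>
      (\<exists>lam B. 0 < lam \<and> (\<forall>i<k. B i \<in> fin_sets N) \<and>
         corr_close F k (\<epsilon> * maxmeas M k A) (corr a M A) lam (corr b N B))"
  proof (cases "k = 0")
    case True
    have "\<exists>lam B. 0 < lam \<and> (\<forall>i<k. B i \<in> fin_sets N) \<and>
        corr_close F k (\<epsilon> * maxmeas M k A) (corr a M A) lam (corr b N B)" for A
      using True by (intro exI[of _ "1::real"]) (simp add: corr_close_def)
    then show ?thesis by (intro exI[of _ "1::real"]) simp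
  next
    case False
    then show ?thesis using assms[OF F \<epsilon>, of k] by blast
  qed
  then show "\<exists>\<delta>>0. \<forall>A. (\<forall>i<k. A i \<in> sets M \<and> 0 < emeasure M (A i) \<and> emeasure M (A i) \<le> ennreal \<delta>) \<longrightarrow>
      (\<exists>lam B. lam > 0 \<and> (\<forall>i<k. B i \<in> fin_sets N) \<and> (\<forall>i<k. \<forall>j<k. \<forall>\<gamma>\<in>F.
         \<bar>measure M (A i \<inter> a \<gamma> ` A j) - lam * measure N (B i \<inter> b \<gamma> ` B j)\<bar> \<le> \<epsilon> * maxmeas M k A))"
    unfolding small_positive_family_def corr_close_def corr_def .
qed

lemma small_positive_familyD:
  assumes "small_positive_family M \<delta> k A" "i < k"
  shows "A i \<in> fin_sets M" "0 < measure M (A i)" "measure M (A i) \<le> \<delta>"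
proof -
  have A: "A i \<in> sets M" "0 < emeasure M (A i)" "emeasure M (A i) \<le> ennreal \<delta>"
    using assms unfolding small_positive_family_def by auto
  then have fin: "emeasure M (A i) < \<infinity>" by (simp add: le_less_trans)
  then show "A i \<in> fin_sets M" using A by (simp add: fin_sets_def)
  show "0 < measure M (A i)" using A fin by (simp add: measure_def enn2real_positive_iff)
  have "0 \<le> \<delta>"
  proof (rule ccontr)
    assume "\<not> 0 \<le> \<delta>"
    then have "ennreal \<delta> = 0" by (simp add: ennreal_neg)
    then show False using A by simp
  qed
  have "enn2real (emeasure M (A i)) \<le> enn2real (ennreal \<delta>)"
    using A by (intro enn2real_mono) auto
  then show "measure M (A i) \<le> \<delta>" using \<open>0 \<le> \<delta>\<close> by (simp add: measure_def)
qed

lemma small_positive_familyI: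
  assumes "\<And>i. i < k \<Longrightarrow> A i \<in> fmeasurable M \<and> 0 < measure M (A i) \<and> measure M (A i) \<le> \<delta>"
  shows "small_positive_family M \<delta> k A"
  using assms unfolding small_positive_family_def
  by (auto simp: emeasure_eq_measure2 ennreal_leI)

lemma (in measure_preserving_action) corr_close_sym_diff:
  assumes "\<forall>i<k. A i \<in> fmeasurable M \<and> U i \<in> fmeasurable M \<and> measure M (sym_diff (A i) (U i)) \<le> d"
  shows "corr_close F k (2 * d) (corr a M A) 1 (corr a M U)"
  unfolding corr_close_def
proof (intro allI impI ballI)
  fix i j \<gamma> assume ij: "i < k" "j < k"
  have "\<bar>corr a M A \<gamma> i j - corr a M U \<gamma> i j\<bar>
      \<le> measure M (sym_diff (A i) (U i)) + measure M (sym_diff (A j) (U j))"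
    unfolding corr_def by (rule abs_measure_Int_image_diff_le) (use assms ij in auto)
  moreover have "measure M (sym_diff (A i) (U i)) \<le> d" "measure M (sym_diff (A j) (U j)) \<le> d"
    using assms ij by auto
  ultimately show "\<bar>corr a M A \<gamma> i j - 1 * corr a M U \<gamma> i j\<bar> \<le> 2 * d" by simp
qed

lemma (in measure_preserving_action) corr_close_disjointed:
  assumes P: "\<forall>p<n. P p \<in> fmeasurable M" and c: "0 \<le> c"
    and overlap: "\<forall>p<n. \<forall>r<n. p \<noteq> r \<longrightarrow> measure M (P p \<inter> P r) \<le> c"
  shows "corr_close UNIV n (2 * (real n * c)) (corr a M P) 1 (corr a M (disjointed P))"
proof -
  have "P p \<in> fmeasurable M \<and> disjointed P p \<in> fmeasurable M \<and>
      measure M (sym_diff (P p) (disjointed P p)) \<le> real n * c" if p: "p < n" for p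
  proof -
    have P_sets: "P r \<in> sets M" if "r \<le> p" for r
      using P p that by (auto intro: fmeasurableD)
    have fin: "disjointed P p \<in> fmeasurable M" using fmeasurable_disjointed[OF P p] .
    have "sym_diff (P p) (disjointed P p) = (\<Union>r\<in>{0..<p}. P p \<inter> P r)"
      by (auto simp: disjointed_def)
    moreover have "measure M (\<Union>r\<in>{0..<p}. P p \<inter> P r) \<le> (\<Sum>r\<in>{0..<p}. measure M (P p \<inter> P r))"
      using P_sets by (intro measure_UNION_le) auto
    ultimately have "measure M (sym_diff (P p) (disjointed P p)) \<le> (\<Sum>r\<in>{0..<p}. measure M (P p \<inter> P r))"
      by simp
    also have "\<dots> \<le> (\<Sum>r\<in>{0..<p}. c)"
      using overlap p by (intro sum_mono) auto
    also have "\<dots> \<le> real n * c"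
      using p c by (simp add: mult_right_mono)
    finally show ?thesis using P p fin by blast
  qed
  then show ?thesis by (intro corr_close_sym_diff) blast
qed

section \<open>Transitivity\<close>

text \<open>The scale \<open>lam1\<close> is controlled through the diagonal entries (\<open>\<gamma> = 0\<close>), which
  compare the measures of the sets themselves; this is why the first approximation must
  include the identity.\<close>
lemma corr_close_chain:
  assumes a0: "a 0 = id" and b0: "b 0 = id" and k: "0 < k" and lam1: "0 < lam1"
    and e1: "0 \<le> e1" "e1 \<le> \<epsilon> / 2" and \<epsilon>: "0 < \<epsilon>"
    and AB: "corr_close (insert 0 F) k (e1 * maxmeas M k A) (corr a M A) lam1 (corr b N B)"
    and BC: "corr_close F k (\<epsilon> / (2 + \<epsilon>) * maxmeas N k B) (corr b N B) lam2 (corr c T C)"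
  shows "corr_close F k (\<epsilon> * maxmeas M k A) (corr a M A) (lam1 * lam2) (corr c T C)"
proof -
  define mA where "mA = maxmeas M k A"
  have mA: "0 \<le> mA" using maxmeas_nonneg[OF k] by (simp add: mA_def)
  have "lam1 * measure N (B i) \<le> (1 + e1) * mA" if "i < k" for i
    using corr_close_scaled_measure_le[OF AB _ a0 b0 that] by (simp add: mA_def)
  then have "maxmeas N k B \<le> (1 + e1) * mA / lam1"
    using lam1 by (intro maxmeas_le[OF k]) (simp add: field_simps)
  then have lam1_mB: "lam1 * maxmeas N k B \<le> (1 + e1) * mA"
    using lam1 by (simp add: field_simps)
  have AB': "corr_close F k (e1 * mA) (corr a M A) lam1 (corr b N B)"
    using corr_close_mono[OF AB] by (auto simp: mA_def)
  have "lam1 * (\<epsilon> / (2 + \<epsilon>) * maxmeas N k B) = \<epsilon> / (2 + \<epsilon>) * (lam1 * maxmeas N k B)"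
    by simp
  also have "\<dots> \<le> \<epsilon> / (2 + \<epsilon>) * ((1 + e1) * mA)"
    using lam1_mB \<epsilon> by (intro mult_left_mono) auto
  finally have "e1 * mA + lam1 * (\<epsilon> / (2 + \<epsilon>) * maxmeas N k B) \<le> e1 * mA + \<epsilon> / (2 + \<epsilon>) * ((1 + e1) * mA)"
    by simp
  also have "\<dots> \<le> \<epsilon> / 2 * mA + \<epsilon> / (2 + \<epsilon>) * ((1 + \<epsilon> / 2) * mA)"
    using e1 \<epsilon> mA by (intro add_mono mult_right_mono mult_left_mono) auto
  also have "\<dots> = \<epsilon> * mA"
    using \<epsilon> by (simp add: field_simps)
  finally show ?thesis
    using corr_close_mono[OF corr_close_trans[OF AB' BC less_imp_le[OF lam1]]] by (simp add: mA_def)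
qed

lemma proj_contained_trans:
  fixes a :: "'g::zero \<Rightarrow> 'x \<Rightarrow> 'x"
  assumes a0: "a 0 = id" and b0: "b 0 = id"
    and AB: "proj_contained a M b N" and BC: "proj_contained b N c T"
  shows "proj_contained a M c T"
proof (rule proj_containedI)
  fix F :: "'g set" and k :: nat and A :: "nat \<Rightarrow> 'x set" and \<epsilon> :: real
  assume F: "finite F" and A: "\<forall>i<k. A i \<in> fin_sets M" and \<epsilon>: "0 < \<epsilon>" and k: "0 < k"
  obtain lam1 B where lam1: "0 < lam1" and B: "\<forall>i<k. B i \<in> fin_sets N"
    and AB: "corr_close (insert 0 F) k (\<epsilon> / 2 * maxmeas M k A) (corr a M A) lam1 (corr b N B)"
    using proj_containedD[OF AB _ A, of "insert 0 F" "\<epsilon> / 2"] F \<epsilon> by auto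
  obtain lam2 C where "0 < lam2" "\<forall>i<k. C i \<in> fin_sets T"
    and "corr_close F k (\<epsilon> / (2 + \<epsilon>) * maxmeas N k B) (corr b N B) lam2 (corr c T C)"
    using proj_containedD[OF BC F B, of "\<epsilon> / (2 + \<epsilon>)"] \<epsilon> by auto
  with corr_close_chain[OF a0 b0 k lam1 _ _ \<epsilon> AB] lam1 \<epsilon>
  show "\<exists>lam C. 0 < lam \<and> (\<forall>i<k. C i \<in> fin_sets T) \<and>
      corr_close F k (\<epsilon> * maxmeas M k A) (corr a M A) lam (corr c T C)"
    by (intro exI[of _ "lam1 * lam2"] exI[of _ C]) auto
qed

lemma inf_contained_proj_contained_trans:
  fixes a :: "'g::zero \<Rightarrow> 'x \<Rightarrow> 'x"
  assumes a0: "a 0 = id" and b0: "b 0 = id"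
    and AB: "inf_contained a M b N" and BC: "proj_contained b N c T"
  shows "inf_contained a M c T"
proof (rule inf_containedI)
  fix F :: "'g set" and k :: nat and \<epsilon> :: real
  assume F: "finite F" and \<epsilon>: "0 < \<epsilon>" and k: "0 < k"
  obtain \<delta> where "0 < \<delta>" and small: "\<And>A. small_positive_family M \<delta> k A \<Longrightarrow>
      \<exists>lam B. 0 < lam \<and> (\<forall>i<k. B i \<in> fin_sets N) \<and>
        corr_close (insert 0 F) k (\<epsilon> / 2 * maxmeas M k A) (corr a M A) lam (corr b N B)"
    using inf_containedD[OF AB finite.insertI[OF F] half_gt_zero[OF \<epsilon>], of k] by blast
  have "\<exists>lam C. 0 < lam \<and> (\<forall>i<k. C i \<in> fin_sets T) \<and>
      corr_close F k (\<epsilon> * maxmeas M k A) (corr a M A) lam (corr c T C)"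
    if A: "small_positive_family M \<delta> k A" for A
  proof -
    obtain lam1 B where lam1: "0 < lam1" and B: "\<forall>i<k. B i \<in> fin_sets N"
      and AB: "corr_close (insert 0 F) k (\<epsilon> / 2 * maxmeas M k A) (corr a M A) lam1 (corr b N B)"
      using small[OF A] by blast
    obtain lam2 C where "0 < lam2" "\<forall>i<k. C i \<in> fin_sets T"
      and "corr_close F k (\<epsilon> / (2 + \<epsilon>) * maxmeas N k B) (corr b N B) lam2 (corr c T C)"
      using proj_containedD[OF BC F B, of "\<epsilon> / (2 + \<epsilon>)"] \<epsilon> by auto
    with corr_close_chain[OF a0 b0 k lam1 _ _ \<epsilon> AB] lam1 \<epsilon> show ?thesis
      by (intro exI[of _ "lam1 * lam2"] exI[of _ C]) auto
  qed
  with \<open>0 < \<delta>\<close> show "\<exists>\<delta>>0. \<forall>A. small_positive_family M \<delta> k A \<longrightarrow>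
      (\<exists>lam C. 0 < lam \<and> (\<forall>i<k. C i \<in> fin_sets T) \<and>
         corr_close F k (\<epsilon> * maxmeas M k A) (corr a M A) lam (corr c T C))"
    by blast
qed

lemma weakly_contained_small_positive_family:
  assumes a0: "a 0 = id" and b0: "b 0 = id" and AB: "weakly_contained a M b N"
    and F: "finite F" "0 \<in> F" and k: "0 < k" and A: "small_positive_family M \<delta> k A" and e: "0 < e"
  obtains B where "small_positive_family N (2 * \<delta>) k B"
    "corr_close F k (e * maxmeas M k A) (corr a M A) 1 (corr b N B)"
proof -
  define mA where "mA = maxmeas M k A"
  define t where "t = Min ((\<lambda>i. measure M (A i)) ` {..<k})"
  have t: "0 < t" "\<And>i. i < k \<Longrightarrow> t \<le> measure M (A i)"
    unfolding t_def using small_positive_familyD(2)[OF A] k by (subst Min_gr_iff; auto) auto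
  have mA: "0 < mA" "mA \<le> \<delta>"
    using maxmeas_ge[OF k, of M A] small_positive_familyD(2)[OF A k]
      maxmeas_le[OF k small_positive_familyD(3)[OF A]]
    by (simp_all add: mA_def)
  \<comment> \<open>The error stays below half the smallest measure, so the approximating sets are not null.\<close>
  define e1 where "e1 = min e (min 1 (t / (2 * mA)))"
  have e1: "0 < e1" "e1 \<le> e" "e1 \<le> 1"
    using e t mA by (simp_all add: e1_def)
  have "e1 * mA \<le> t / (2 * mA) * mA"
    using mA by (intro mult_right_mono) (simp_all add: e1_def)
  then have e1_t: "e1 * mA \<le> t / 2"
    using mA by simp
  have e1_\<delta>: "e1 * mA \<le> \<delta>"
    using e1 mA mult_left_le_one_le[of mA e1] by linarith
  obtain B where B: "\<forall>i<k. B i \<in> fin_sets N"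
    and AB: "corr_close F k (e1 * mA) (corr a M A) 1 (corr b N B)"
    using weakly_containedD[OF AB F(1) _ e1(1), of k A] small_positive_familyD(1)[OF A]
    by (auto simp: mA_def)
  have "small_positive_family N (2 * \<delta>) k B"
  proof (rule small_positive_familyI)
    fix i assume i: "i < k"
    have "\<bar>measure M (A i) - measure N (B i)\<bar> \<le> e1 * mA"
      using corr_close_measure[OF AB F(2) a0 b0 i] by simp
    then show "B i \<in> fmeasurable N \<and> 0 < measure N (B i) \<and> measure N (B i) \<le> 2 * \<delta>"
      using B i t(2)[OF i] e1_t e1_\<delta> t(1) small_positive_familyD(3)[OF A i]
      by (simp add: fin_sets_eq_fmeasurable abs_le_iff)
  qed
  moreover have "corr_close F k (e * maxmeas M k A) (corr a M A) 1 (corr b N B)"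
    using AB e1 mA by (auto simp: mA_def elim!: corr_close_mono)
  ultimately show thesis by (rule that)
qed

lemma weakly_contained_inf_contained_trans:
  fixes a :: "'g::zero \<Rightarrow> 'x \<Rightarrow> 'x"
  assumes a0: "a 0 = id" and b0: "b 0 = id"
    and AB: "weakly_contained a M b N" and BC: "inf_contained b N c T"
  shows "inf_contained a M c T"
proof (rule inf_containedI)
  fix F :: "'g set" and k :: nat and \<epsilon> :: real
  assume F: "finite F" and \<epsilon>: "0 < \<epsilon>" and k: "0 < k"
  have "0 < \<epsilon> / (2 + \<epsilon>)" using \<epsilon> by simp
  then obtain \<delta> where \<delta>: "0 < \<delta>" and small: "\<And>B. small_positive_family N \<delta> k B \<Longrightarrow>
      \<exists>lam C. 0 < lam \<and> (\<forall>i<k. C i \<in> fin_sets T) \<and>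
        corr_close F k (\<epsilon> / (2 + \<epsilon>) * maxmeas N k B) (corr b N B) lam (corr c T C)"
    using inf_containedD[OF BC F, of _ k] by blast
  have "\<exists>lam C. 0 < lam \<and> (\<forall>i<k. C i \<in> fin_sets T) \<and>
      corr_close F k (\<epsilon> * maxmeas M k A) (corr a M A) lam (corr c T C)"
    if A: "small_positive_family M (\<delta> / 2) k A" for A
  proof -
    have "finite (insert 0 F)" "0 \<in> insert 0 F" "0 < \<epsilon> / 2" using F \<epsilon> by simp_all
    then obtain B where B: "small_positive_family N (2 * (\<delta> / 2)) k B"
      and AB: "corr_close (insert 0 F) k (\<epsilon> / 2 * maxmeas M k A) (corr a M A) 1 (corr b N B)"
      by (rule weakly_contained_small_positive_family[OF a0 b0 AB _ _ k A])
    from B have "small_positive_family N \<delta> k B" by simp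
    then obtain lam2 C where "0 < lam2" "\<forall>i<k. C i \<in> fin_sets T"
      and BC: "corr_close F k (\<epsilon> / (2 + \<epsilon>) * maxmeas N k B) (corr b N B) lam2 (corr c T C)"
      using small by blast
    moreover have "corr_close F k (\<epsilon> * maxmeas M k A) (corr a M A) (1 * lam2) (corr c T C)"
      using \<epsilon> by (intro corr_close_chain[OF a0 b0 k zero_less_one _ _ \<epsilon> AB BC]) auto
    ultimately show ?thesis by auto
  qed
  with \<delta> show "\<exists>\<delta>>0. \<forall>A. small_positive_family M \<delta> k A \<longrightarrow>
      (\<exists>lam C. 0 < lam \<and> (\<forall>i<k. C i \<in> fin_sets T) \<and>
         corr_close F k (\<epsilon> * maxmeas M k A) (corr a M A) lam (corr c T C))"
    by (intro exI[of _ "\<delta> / 2"]) auto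
qed

section \<open>Infinite measure\<close>
lemma (in sigma_finite_measure) exists_fmeasurable_measure_gt:
  assumes "emeasure M (space M) = \<infinity>"
  obtains W where "W \<in> fmeasurable M" "C < measure M W"
proof -
  obtain Z where Z: "Z \<in> sets M" "emeasure M Z < \<infinity>" "ennreal (max 0 C) < emeasure M Z"
    using approx_PInf_emeasure_with_finite[OF sets.top assms] by blast
  then have "ennreal (max 0 C) < ennreal (measure M Z)"
    by (simp add: emeasure_eq_measure2 fmeasurableI)
  then have "max 0 C < measure M Z"
    by (subst (asm) ennreal_less_iff) auto
  then have "C < measure M Z"
    by simp
  with Z show thesis by (intro that) (auto intro: fmeasurableI)
qed

text \<open>Approximating, along with the given family, a set of huge measure by a subset of the
  probability space forces the scale factor to be large.\<close>
lemma proj_contained_large_scale: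
  assumes a0: "a 0 = id" and b0: "b 0 = id"
    and M: "sigma_finite_measure M" and inf: "emeasure M (space M) = \<infinity>" and N: "prob_space N"
    and AB: "proj_contained a M b N"
    and F: "finite F" and A: "\<forall>i<k. A i \<in> fin_sets M" and e: "0 < e"
  obtains lam B where "\<Lambda> \<le> lam" "0 < lam" "\<forall>i<k. B i \<in> fin_sets N"
    "corr_close F k e (corr a M A) lam (corr b N B)"
proof -
  obtain W where W: "W \<in> fmeasurable M" and W_gt: "(\<Sum>i<k. measure M (A i)) + 2 * \<bar>\<Lambda>\<bar> < measure M W"
    using sigma_finite_measure.exists_fmeasurable_measure_gt[OF M inf] by blast
  define L where "L = measure M W"
  have sum_A: "0 \<le> (\<Sum>i<k. measure M (A i))" by (simp add: sum_nonneg)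
  have L: "0 < L" "2 * \<Lambda> \<le> L" using W_gt sum_A by (auto simp: L_def)
  define A' where "A' = A(k := W)"
  have A': "\<forall>i<Suc k. A' i \<in> fin_sets M"
    using A W by (simp add: A'_def fin_sets_eq_fmeasurable less_Suc_eq)
  have "measure M (A' i) \<le> L" if "i < Suc k" for i
  proof (cases "i = k")
    case False
    then have "measure M (A i) \<le> (\<Sum>i<k. measure M (A i))"
      using that by (intro member_le_sum) auto
    then have "measure M (A' i) \<le> (\<Sum>i<k. measure M (A i))"
      using False by (simp add: A'_def)
    then show ?thesis using W_gt by (simp add: L_def)
  qed (simp add: A'_def L_def)
  then have max_A': "maxmeas M (Suc k) A' = L"
    using maxmeas_ge[of k "Suc k" M A'] maxmeas_le[of "Suc k" M A' L] by (simp add: A'_def L_def)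
  define e' where "e' = min e (L / 2) / L"
  have "0 < e'" using e L by (simp add: e'_def)
  then obtain lam B where lam: "0 < lam" and B: "\<forall>i<Suc k. B i \<in> fin_sets N"
    and A'B: "corr_close (insert 0 F) (Suc k) (min e (L / 2)) (corr a M A') lam (corr b N B)"
    using proj_containedD[OF AB _ A', of "insert 0 F" e'] F L by (auto simp: max_A' e'_def)
  have "\<bar>L - lam * measure N (B k)\<bar> \<le> L / 2"
    using corr_close_measure[OF A'B _ a0 b0, of k] by (simp add: A'_def L_def)
  moreover have "lam * measure N (B k) \<le> lam"
    using lam prob_space.prob_le_1[OF N] by (simp add: mult_left_le)
  ultimately have "\<Lambda> \<le> lam" using L by linarith
  moreover have "corr_close F k e (corr a M A) lam (corr b N B)"
    unfolding corr_close_def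
  proof (intro allI impI ballI)
    fix i j \<gamma> assume ij: "i < k" "j < k" and "\<gamma> \<in> F"
    then have "\<bar>corr a M A' \<gamma> i j - lam * corr b N B \<gamma> i j\<bar> \<le> e"
      using A'B by (auto simp: corr_close_def)
    moreover have "corr a M A' \<gamma> i j = corr a M A \<gamma> i j"
      using ij by (simp add: corr_def A'_def)
    ultimately show "\<bar>corr a M A \<gamma> i j - lam * corr b N B \<gamma> i j\<bar> \<le> e" by simp
  qed
  ultimately show thesis
    using lam B by (intro that[of lam B]) auto
qed

lemma proj_contained_exists_small_set:
  assumes a0: "a 0 = id" and b0: "b 0 = id"
    and M: "sigma_finite_measure M" and inf: "emeasure M (space M) = \<infinity>" and N: "prob_space N"
    and AB: "proj_contained a M b N" and t: "0 < t"
  obtains E where "E \<in> sets N" "0 < measure N E" "measure N E \<le> t"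
proof -
  obtain P where P: "P \<in> fmeasurable M" and p: "0 < measure M P"
    using sigma_finite_measure.exists_fmeasurable_measure_gt[OF M inf] by blast
  define p where "p = measure M P"
  have p0: "0 < p" using p by (simp add: p_def)
  obtain lam B where lam: "3 * p / (2 * t) \<le> lam" "0 < lam" and B: "\<forall>i<1. B i \<in> fin_sets N"
    and PB: "corr_close {0} 1 (p / 2) (corr a M (\<lambda>_. P)) lam (corr b N B)"
    using proj_contained_large_scale[OF a0 b0 M inf N AB, of "{0}" 1 "\<lambda>_. P" "p / 2"] P p0
    by (auto simp: fin_sets_eq_fmeasurable)
  have "\<bar>p - lam * measure N (B 0)\<bar> \<le> p / 2"
    using corr_close_measure[OF PB _ a0 b0] by (simp add: p_def)
  then have B0: "p / 2 \<le> lam * measure N (B 0)" "lam * measure N (B 0) \<le> 3 * p / 2"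
    by linarith+
  have "0 < lam * measure N (B 0)" using B0(1) p0 by linarith
  then have pos: "0 < measure N (B 0)" using lam(2) by (simp add: zero_less_mult_iff)
  have "3 * p / 2 = 3 * p / (2 * t) * t" using t by simp
  also have "\<dots> \<le> lam * t" using lam(1) t by (intro mult_right_mono) auto
  finally have "lam * measure N (B 0) \<le> lam * t" using B0(2) by linarith
  then have "measure N (B 0) \<le> t" using lam(2) by simp
  with pos B show thesis by (intro that[of "B 0"]) (auto simp: fin_sets_def)
qed

text \<open>Choose the scale factor so large that the approximating sets in the probability space
  become small, then adjoin to each of them one tiny set of positive measure.\<close>
lemma proj_contained_small_positive_approximation:
  assumes X: "measure_preserving_action a M" and Y: "measure_preserving_action b N"
    and inf: "emeasure M (space M) = \<infinity>" and N: "prob_space N" and AB: "proj_contained a M b N"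
    and F: "finite F" "0 \<in> F" and A: "\<forall>i<k. A i \<in> fin_sets M" and mA: "0 < maxmeas M k A"
    and \<delta>: "0 < \<delta>" and e: "0 < e" "e \<le> 1"
  obtains lam B where "0 < lam" "small_positive_family N \<delta> k B"
    "corr_close F k (e * maxmeas M k A) (corr a M A) lam (corr b N B)"
proof -
  interpret X: measure_preserving_action a M by (rule X)
  interpret Y: measure_preserving_action b N by (rule Y)
  interpret N: prob_space N by (rule N)
  have "0 < e / 3 * maxmeas M k A" using e mA by simp
  then obtain lam B where lam: "4 * maxmeas M k A / \<delta> \<le> lam" "0 < lam"
    and B: "\<forall>i<k. B i \<in> fin_sets N"
    and AB1: "corr_close F k (e / 3 * maxmeas M k A) (corr a M A) lam (corr b N B)"
    by (rule proj_contained_large_scale[OF X.act_zero Y.act_zero X.sigma_finite_measure_axioms inf N AB F(1) A])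
  have B_small: "measure N (B i) \<le> \<delta> / 2" if i: "i < k" for i
  proof -
    have "lam * measure N (B i) \<le> (1 + e / 3) * maxmeas M k A"
      using corr_close_scaled_measure_le[OF AB1 F(2) X.act_zero Y.act_zero i] .
    also have "\<dots> \<le> 4 * maxmeas M k A / \<delta> * (\<delta> / 2)"
      using e mA \<delta> by (simp add: mult_right_mono)
    also have "\<dots> \<le> lam * (\<delta> / 2)"
      using lam(1) \<delta> by (intro mult_right_mono) auto
    finally show ?thesis using lam(2) by simp
  qed
  have "0 < min (\<delta> / 2) (e / 3 * maxmeas M k A / lam)" using \<delta> e mA lam by simp
  then obtain E where E: "E \<in> sets N" "0 < measure N E"
    "measure N E \<le> min (\<delta> / 2) (e / 3 * maxmeas M k A / lam)"
    by (rule proj_contained_exists_small_set[OF X.act_zero Y.act_zero X.sigma_finite_measure_axioms inf N AB])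
  define B' where "B' i = B i \<union> E" for i
  have B'_close: "\<forall>i<k. B i \<in> fmeasurable N \<and> B' i \<in> fmeasurable N \<and>
      measure N (sym_diff (B i) (B' i)) \<le> measure N E"
    using B E(1) by (auto simp: B'_def fin_sets_def N.fmeasurable_eq_sets intro!: N.finite_measure_mono)
  have "small_positive_family N \<delta> k B'"
  proof (rule small_positive_familyI)
    fix i assume i: "i < k"
    have "measure N E \<le> measure N (B' i)" "measure N (B' i) \<le> measure N (B i) + measure N E"
      using B'_close E(1) i by (auto simp: B'_def intro!: N.finite_measure_mono measure_Un_le)
    then show "B' i \<in> fmeasurable N \<and> 0 < measure N (B' i) \<and> measure N (B' i) \<le> \<delta>"
      using B'_close E B_small[OF i] i by auto
  qed
  moreover have "corr_close F k (e / 3 * maxmeas M k A + lam * (2 * measure N E)) (corr a M A)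
      (lam * 1) (corr b N B')"
    using corr_close_trans[OF AB1 Y.corr_close_sym_diff[OF B'_close]] lam(2) by simp
  then have "corr_close F k (e * maxmeas M k A) (corr a M A) lam (corr b N B')"
    using E(3) lam(2) by (auto simp: field_simps elim!: corr_close_mono)
  ultimately show thesis using lam(2) by (rule that[rotated])
qed

lemma proj_contained_inf_contained_trans_of_infinite:
  fixes a :: "'g::group_add \<Rightarrow> 'x \<Rightarrow> 'x"
  assumes X: "measure_preserving_action a M" and Y: "measure_preserving_action b N"
    and inf: "emeasure M (space M) = \<infinity>" and N: "prob_space N"
    and AB: "proj_contained a M b N" and BC: "inf_contained b N c T"
  shows "proj_contained a M c T"
proof (rule proj_containedI)
  fix F :: "'g set" and k :: nat and A :: "nat \<Rightarrow> 'x set" and \<epsilon> :: real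
  assume F: "finite F" and A: "\<forall>i<k. A i \<in> fin_sets M" and \<epsilon>: "0 < \<epsilon>" and k: "0 < k"
    and mA: "0 < maxmeas M k A"
  have a0: "a 0 = id" and b0: "b 0 = id"
    using measure_preserving_action.act_zero[OF X] measure_preserving_action.act_zero[OF Y] .
  have "0 < \<epsilon> / (2 + \<epsilon>)" using \<epsilon> by simp
  then obtain \<delta> where \<delta>: "0 < \<delta>" and small: "\<And>B. small_positive_family N \<delta> k B \<Longrightarrow>
      \<exists>lam C. 0 < lam \<and> (\<forall>i<k. C i \<in> fin_sets T) \<and>
        corr_close F k (\<epsilon> / (2 + \<epsilon>) * maxmeas N k B) (corr b N B) lam (corr c T C)"
    using inf_containedD[OF BC F, of _ k] by blast
  have "finite (insert 0 F)" "0 \<in> insert 0 F" "0 < min (\<epsilon> / 2) 1" "min (\<epsilon> / 2) 1 \<le> 1"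
    using F \<epsilon> by simp_all
  then obtain lam1 B where lam1: "0 < lam1" and B: "small_positive_family N \<delta> k B"
    and AB: "corr_close (insert 0 F) k (min (\<epsilon> / 2) 1 * maxmeas M k A) (corr a M A) lam1 (corr b N B)"
    by (rule proj_contained_small_positive_approximation[OF X Y inf N AB _ _ A mA \<delta>])
  obtain lam2 C where "0 < lam2" "\<forall>i<k. C i \<in> fin_sets T"
    and BC: "corr_close F k (\<epsilon> / (2 + \<epsilon>) * maxmeas N k B) (corr b N B) lam2 (corr c T C)"
    using small[OF B] by blast
  moreover have "corr_close F k (\<epsilon> * maxmeas M k A) (corr a M A) (lam1 * lam2) (corr c T C)"
    by (rule corr_close_chain[OF a0 b0 k lam1 _ _ \<epsilon> AB BC]) (use \<epsilon> in auto)
  ultimately show "\<exists>lam C. 0 < lam \<and> (\<forall>i<k. C i \<in> fin_sets T) \<and>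
      corr_close F k (\<epsilon> * maxmeas M k A) (corr a M A) lam (corr c T C)"
    using lam1 by (intro exI[of _ "lam1 * lam2"] exI[of _ C]) simp
qed

section \<open>Approximation by grid sets\<close>

definition measurable_partition :: "'a measure \<Rightarrow> 'a set \<Rightarrow> 'a set set \<Rightarrow> bool" where
  "measurable_partition M K PP \<longleftrightarrow> finite PP \<and> PP \<subseteq> sets M \<and> \<Union>PP = K \<and> disjoint PP"

definition common_refinement :: "'a set set \<Rightarrow> 'a set set \<Rightarrow> 'a set set" where
  "common_refinement PP PP' = (\<lambda>(P, P'). P \<inter> P') ` (PP \<times> PP')"

definition grid_set :: "'a set set \<Rightarrow> 'b set set \<Rightarrow> ('a \<times> 'b) set \<Rightarrow> bool" where
  "grid_set PP QQ U \<longleftrightarrow> (\<forall>x\<in>U. \<exists>P\<in>PP. \<exists>Q\<in>QQ. x \<in> P \<times> Q \<and> P \<times> Q \<subseteq> U)"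

lemma grid_setD: "grid_set PP QQ U \<Longrightarrow> x \<in> U \<Longrightarrow> \<exists>P\<in>PP. \<exists>Q\<in>QQ. x \<in> P \<times> Q \<and> P \<times> Q \<subseteq> U"
  unfolding grid_set_def by (rule bspec)

lemma measurable_partition_eq:
  "measurable_partition M K PP \<Longrightarrow> P \<in> PP \<Longrightarrow> P' \<in> PP \<Longrightarrow> x \<in> P \<Longrightarrow> x \<in> P' \<Longrightarrow> P = P'"
  unfolding measurable_partition_def pairwise_def disjnt_def by blast

lemma measurable_partition_subset: "measurable_partition M K PP \<Longrightarrow> P \<in> PP \<Longrightarrow> P \<subseteq> K"
  unfolding measurable_partition_def by auto

lemma measurable_partition_cover: "measurable_partition M K PP \<Longrightarrow> x \<in> K \<Longrightarrow> \<exists>P\<in>PP. x \<in> P"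
  unfolding measurable_partition_def by auto

lemma common_refinementE:
  assumes "R \<in> common_refinement PP PP'"
  obtains P P' where "P \<in> PP" "P' \<in> PP'" "R = P \<inter> P'"
  using assms unfolding common_refinement_def by auto

lemma measurable_partition_common_refinement:
  assumes P: "measurable_partition M K PP" and P': "measurable_partition M K PP'"
  shows "measurable_partition M K (common_refinement PP PP')"
proof -
  have "disjnt R S"
    if R: "R \<in> common_refinement PP PP'" and S: "S \<in> common_refinement PP PP'" and "R \<noteq> S" for R S
  proof -
    obtain A A' where A: "A \<in> PP" "A' \<in> PP'" "R = A \<inter> A'" using R by (rule common_refinementE)
    obtain B B' where B: "B \<in> PP" "B' \<in> PP'" "S = B \<inter> B'" using S by (rule common_refinementE)
    have "A = B \<and> A' = B'" if "x \<in> R" "x \<in> S" for x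
      using measurable_partition_eq[OF P A(1) B(1)] measurable_partition_eq[OF P' A(2) B(2)] A B that
      by blast
    then show ?thesis using A B \<open>R \<noteq> S\<close> unfolding disjnt_def by blast
  qed
  moreover have "\<Union>(common_refinement PP PP') = K"
  proof
    show "\<Union>(common_refinement PP PP') \<subseteq> K"
      using measurable_partition_subset[OF P] by (auto elim!: common_refinementE)
    show "K \<subseteq> \<Union>(common_refinement PP PP')"
    proof
      fix x assume "x \<in> K"
      then obtain A A' where "A \<in> PP" "A' \<in> PP'" "x \<in> A" "x \<in> A'"
        using measurable_partition_cover[OF P] measurable_partition_cover[OF P'] by metis
      then show "x \<in> \<Union>(common_refinement PP PP')" unfolding common_refinement_def by blast
    qed
  qed
  moreover have "finite (common_refinement PP PP')"
    using P P' by (simp add: measurable_partition_def common_refinement_def)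
  moreover have "common_refinement PP PP' \<subseteq> sets M"
  proof
    fix R assume "R \<in> common_refinement PP PP'"
    then show "R \<in> sets M"
      using P P' unfolding measurable_partition_def by (elim common_refinementE) auto
  qed
  ultimately show ?thesis
    unfolding measurable_partition_def pairwise_def by blast
qed

lemma common_refinement_subset:
  assumes "R \<in> common_refinement PP PP'"
  shows "\<exists>P\<in>PP. R \<subseteq> P" "\<exists>P'\<in>PP'. R \<subseteq> P'"
  using assms by (elim common_refinementE; blast)+

lemma grid_set_subset:
  assumes "measurable_partition M1 K1 PP" "measurable_partition M2 K2 QQ" "grid_set PP QQ U"
  shows "U \<subseteq> K1 \<times> K2"
proof
  fix x assume "x \<in> U"
  then obtain P Q where "P \<in> PP" "Q \<in> QQ" "x \<in> P \<times> Q"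
    using grid_setD[OF assms(3)] by blast
  moreover have "P \<times> Q \<subseteq> K1 \<times> K2"
    using measurable_partition_subset[OF assms(1) \<open>P \<in> PP\<close>] measurable_partition_subset[OF assms(2) \<open>Q \<in> QQ\<close>]
    by auto
  ultimately show "x \<in> K1 \<times> K2" by auto
qed

lemma grid_set_refine:
  assumes P: "measurable_partition M1 K1 PP" "measurable_partition M1 K1 PP'"
    and Q: "measurable_partition M2 K2 QQ" "measurable_partition M2 K2 QQ'"
    and refines: "\<forall>P'\<in>PP'. \<exists>P\<in>PP. P' \<subseteq> P" "\<forall>Q'\<in>QQ'. \<exists>Q\<in>QQ. Q' \<subseteq> Q"
    and U: "grid_set PP QQ U"
  shows "grid_set PP' QQ' U"
  unfolding grid_set_def
proof
  fix x assume "x \<in> U"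
  then obtain P Q where PQ: "P \<in> PP" "Q \<in> QQ" "x \<in> P \<times> Q" "P \<times> Q \<subseteq> U"
    using grid_setD[OF U] by blast
  have x: "fst x \<in> P" "snd x \<in> Q" using PQ(3) by (simp_all add: mem_Times_iff)
  obtain P' where P': "P' \<in> PP'" "fst x \<in> P'"
    using measurable_partition_cover[OF P(2)] measurable_partition_subset[OF P(1) PQ(1)] x(1) by blast
  obtain Q' where Q': "Q' \<in> QQ'" "snd x \<in> Q'"
    using measurable_partition_cover[OF Q(2)] measurable_partition_subset[OF Q(1) PQ(2)] x(2) by blast
  obtain P1 where "P1 \<in> PP" "P' \<subseteq> P1" using refines(1) P'(1) by blast
  then have "P' \<subseteq> P" using measurable_partition_eq[OF P(1) _ PQ(1)] P'(2) x(1) by blast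
  obtain Q1 where "Q1 \<in> QQ" "Q' \<subseteq> Q1" using refines(2) Q'(1) by blast
  then have "Q' \<subseteq> Q" using measurable_partition_eq[OF Q(1) _ PQ(2)] Q'(2) x(2) by blast
  then have "P' \<times> Q' \<subseteq> U" using \<open>P' \<subseteq> P\<close> PQ(4) by auto
  moreover have "x \<in> P' \<times> Q'" using P'(2) Q'(2) by (simp add: mem_Times_iff)
  ultimately show "\<exists>P\<in>PP'. \<exists>Q\<in>QQ'. x \<in> P \<times> Q \<and> P \<times> Q \<subseteq> U"
    using P'(1) Q'(1) by blast
qed

lemma grid_set_Un: "grid_set PP QQ U \<Longrightarrow> grid_set PP QQ V \<Longrightarrow> grid_set PP QQ (U \<union> V)"
  unfolding grid_set_def by (meson UnE le_supI1 le_supI2)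

lemma grid_set_Diff:
  assumes P: "measurable_partition M1 K1 PP" and Q: "measurable_partition M2 K2 QQ"
    and U: "grid_set PP QQ U"
  shows "grid_set PP QQ (K1 \<times> K2 - U)"
  unfolding grid_set_def
proof
  fix x assume x: "x \<in> K1 \<times> K2 - U"
  obtain P where "P \<in> PP" "fst x \<in> P" using measurable_partition_cover[OF P, of "fst x"] x by auto
  moreover obtain Q where "Q \<in> QQ" "snd x \<in> Q" using measurable_partition_cover[OF Q, of "snd x"] x by auto
  ultimately have PQ: "P \<in> PP" "Q \<in> QQ" "x \<in> P \<times> Q" by (simp_all add: mem_Times_iff)
  have "P \<times> Q \<inter> U = {}"
  proof (rule ccontr)
    assume "P \<times> Q \<inter> U \<noteq> {}"
    then obtain z where z: "z \<in> P \<times> Q" "z \<in> U" by blast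
    then obtain P' Q' where z': "P' \<in> PP" "Q' \<in> QQ" "z \<in> P' \<times> Q'" "P' \<times> Q' \<subseteq> U"
      using grid_setD[OF U] by blast
    then have "P' = P" "Q' = Q"
      using measurable_partition_eq[OF P z'(1) PQ(1), of "fst z"] measurable_partition_eq[OF Q z'(2) PQ(2), of "snd z"]
        z(1) z'(3) by (auto simp: mem_Times_iff)
    then show False using z'(4) PQ(3) x by auto
  qed
  moreover have "P \<times> Q \<subseteq> K1 \<times> K2"
    using measurable_partition_subset[OF P PQ(1)] measurable_partition_subset[OF Q PQ(2)] by auto
  ultimately have "P \<times> Q \<subseteq> K1 \<times> K2 - U" by auto
  then show "\<exists>P\<in>PP. \<exists>Q\<in>QQ. x \<in> P \<times> Q \<and> P \<times> Q \<subseteq> K1 \<times> K2 - U"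
    using PQ by blast
qed

lemma grid_set_eq_UN:
  "grid_set PP QQ U \<Longrightarrow> U = (\<Union>(P, Q)\<in>{(P, Q) \<in> PP \<times> QQ. P \<times> Q \<subseteq> U}. P \<times> Q)"
  unfolding grid_set_def by fast

lemma grid_set_sets:
  assumes "measurable_partition M1 K1 PP" "measurable_partition M2 K2 QQ" "grid_set PP QQ U"
  shows "U \<in> sets (M1 \<Otimes>\<^sub>M M2)"
proof -
  have "finite {(P, Q) \<in> PP \<times> QQ. P \<times> Q \<subseteq> U}"
    using assms(1,2) unfolding measurable_partition_def by (auto intro: finite_subset)
  then have "(\<Union>(P, Q)\<in>{(P, Q) \<in> PP \<times> QQ. P \<times> Q \<subseteq> U}. P \<times> Q) \<in> sets (M1 \<Otimes>\<^sub>M M2)"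
    using assms(1,2) unfolding measurable_partition_def by (intro sets.finite_UN) auto
  then show ?thesis using grid_set_eq_UN[OF assms(3)] by simp
qed

definition grid_approximable :: "'a measure \<Rightarrow> 'b measure \<Rightarrow> 'a set \<Rightarrow> 'b set \<Rightarrow> ('a \<times> 'b) set \<Rightarrow> bool" where
  "grid_approximable M1 M2 K1 K2 A \<longleftrightarrow> (\<forall>e>0. \<exists>PP QQ U.
     measurable_partition M1 K1 PP \<and> measurable_partition M2 K2 QQ \<and> grid_set PP QQ U \<and>
     measure (M1 \<Otimes>\<^sub>M M2) (sym_diff (A \<inter> K1 \<times> K2) U) < e)"

text \<open>The sets whose trace on \<open>K1 \<times> K2\<close> is approximable by grid sets form a \<open>\<sigma>\<close>-algebra
  containing the rectangles.\<close>
context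
  fixes M1 :: "'a measure" and M2 :: "'b measure" and K1 K2
  assumes K1: "K1 \<in> sets M1" and K2: "K2 \<in> sets M2"
    and K_fin: "K1 \<times> K2 \<in> fmeasurable (M1 \<Otimes>\<^sub>M M2)"
    and space1: "space M1 = UNIV" and space2: "space M2 = UNIV"
begin

lemma grid_set_fmeasurable:
  "measurable_partition M1 K1 PP \<Longrightarrow> measurable_partition M2 K2 QQ \<Longrightarrow> grid_set PP QQ U \<Longrightarrow>
    U \<in> fmeasurable (M1 \<Otimes>\<^sub>M M2)"
  using grid_set_sets grid_set_subset by (blast intro: fmeasurableI2[OF K_fin])

lemma fmeasurable_sym_diff_Int:
  "A \<in> sets (M1 \<Otimes>\<^sub>M M2) \<Longrightarrow> U \<in> fmeasurable (M1 \<Otimes>\<^sub>M M2) \<Longrightarrow>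
    sym_diff (A \<inter> K1 \<times> K2) U \<in> fmeasurable (M1 \<Otimes>\<^sub>M M2)"
  using K_fin by (auto intro: fmeasurableI2[of "K1 \<times> K2 \<union> U"])

lemma grid_approximable_Un:
  assumes A: "A \<in> sets (M1 \<Otimes>\<^sub>M M2)" "grid_approximable M1 M2 K1 K2 A"
    and B: "B \<in> sets (M1 \<Otimes>\<^sub>M M2)" "grid_approximable M1 M2 K1 K2 B"
  shows "grid_approximable M1 M2 K1 K2 (A \<union> B)"
  unfolding grid_approximable_def
proof (intro allI impI)
  fix e :: real assume e: "0 < e"
  obtain PA QA UA where a: "measurable_partition M1 K1 PA" "measurable_partition M2 K2 QA"
    "grid_set PA QA UA" "measure (M1 \<Otimes>\<^sub>M M2) (sym_diff (A \<inter> K1 \<times> K2) UA) < e / 2"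
    using A(2) e unfolding grid_approximable_def by (meson half_gt_zero)
  obtain PB QB UB where b: "measurable_partition M1 K1 PB" "measurable_partition M2 K2 QB"
    "grid_set PB QB UB" "measure (M1 \<Otimes>\<^sub>M M2) (sym_diff (B \<inter> K1 \<times> K2) UB) < e / 2"
    using B(2) e unfolding grid_approximable_def by (meson half_gt_zero)
  define PP where "PP = common_refinement PA PB"
  define QQ where "QQ = common_refinement QA QB"
  have P: "measurable_partition M1 K1 PP" "measurable_partition M2 K2 QQ"
    using a b by (simp_all add: PP_def QQ_def measurable_partition_common_refinement)
  have "grid_set PP QQ UA" "grid_set PP QQ UB"
    using grid_set_refine[OF a(1) P(1) a(2) P(2) _ _ a(3)] grid_set_refine[OF b(1) P(1) b(2) P(2) _ _ b(3)]
    by (auto simp: PP_def QQ_def dest: common_refinement_subset)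
  then have "grid_set PP QQ (UA \<union> UB)" by (rule grid_set_Un)
  moreover have "measure (M1 \<Otimes>\<^sub>M M2) (sym_diff ((A \<union> B) \<inter> K1 \<times> K2) (UA \<union> UB))
      \<le> measure (M1 \<Otimes>\<^sub>M M2) (sym_diff (A \<inter> K1 \<times> K2) UA) + measure (M1 \<Otimes>\<^sub>M M2) (sym_diff (B \<inter> K1 \<times> K2) UB)"
    using A(1) B(1) K_fin grid_set_fmeasurable[OF a(1-3)] grid_set_fmeasurable[OF b(1-3)]
    by (intro measure_subset_Un_le fmeasurable_sym_diff_Int) auto
  ultimately show "\<exists>PP QQ U. measurable_partition M1 K1 PP \<and> measurable_partition M2 K2 QQ \<and>
      grid_set PP QQ U \<and> measure (M1 \<Otimes>\<^sub>M M2) (sym_diff ((A \<union> B) \<inter> K1 \<times> K2) U) < e"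
    using P a(4) b(4) by (intro exI[of _ PP] exI[of _ QQ] exI[of _ "UA \<union> UB"]) auto
qed

lemma grid_approximable_Compl:
  assumes "grid_approximable M1 M2 K1 K2 A"
  shows "grid_approximable M1 M2 K1 K2 (UNIV - A)"
  unfolding grid_approximable_def
proof (intro allI impI)
  fix e :: real assume "0 < e"
  then obtain PP QQ U where a: "measurable_partition M1 K1 PP" "measurable_partition M2 K2 QQ"
    "grid_set PP QQ U" "measure (M1 \<Otimes>\<^sub>M M2) (sym_diff (A \<inter> K1 \<times> K2) U) < e"
    using assms unfolding grid_approximable_def by meson
  have "sym_diff ((UNIV - A) \<inter> K1 \<times> K2) (K1 \<times> K2 - U) = sym_diff (A \<inter> K1 \<times> K2) U"
    using grid_set_subset[OF a(1-3)] by blast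
  then show "\<exists>PP QQ U'. measurable_partition M1 K1 PP \<and> measurable_partition M2 K2 QQ \<and>
      grid_set PP QQ U' \<and> measure (M1 \<Otimes>\<^sub>M M2) (sym_diff ((UNIV - A) \<inter> K1 \<times> K2) U') < e"
    using a grid_set_Diff[OF a(1-3)] by (intro exI[of _ PP] exI[of _ QQ] exI[of _ "K1 \<times> K2 - U"]) auto
qed

lemma grid_approximable_Times:
  assumes "A \<in> sets M1" "B \<in> sets M2"
  shows "grid_approximable M1 M2 K1 K2 (A \<times> B)"
  unfolding grid_approximable_def
proof (intro allI impI)
  fix e :: real assume "0 < e"
  have "measurable_partition M1 K1 {K1 \<inter> A, K1 - A}" "measurable_partition M2 K2 {K2 \<inter> B, K2 - B}"
    using K1 K2 assms by (auto simp: measurable_partition_def pairwise_def disjnt_def)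
  moreover have "grid_set {K1 \<inter> A, K1 - A} {K2 \<inter> B, K2 - B} ((K1 \<inter> A) \<times> (K2 \<inter> B))"
    unfolding grid_set_def by (intro ballI bexI[of _ "K1 \<inter> A"] bexI[of _ "K2 \<inter> B"] conjI) auto
  moreover have "sym_diff (A \<times> B \<inter> K1 \<times> K2) ((K1 \<inter> A) \<times> (K2 \<inter> B)) = {}" by auto
  then have "measure (M1 \<Otimes>\<^sub>M M2) (sym_diff (A \<times> B \<inter> K1 \<times> K2) ((K1 \<inter> A) \<times> (K2 \<inter> B))) < e"
    using \<open>0 < e\<close> by (simp only: measure_empty)
  ultimately show "\<exists>PP QQ U. measurable_partition M1 K1 PP \<and> measurable_partition M2 K2 QQ \<and>
      grid_set PP QQ U \<and> measure (M1 \<Otimes>\<^sub>M M2) (sym_diff (A \<times> B \<inter> K1 \<times> K2) U) < e"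
    by blast
qed

lemma grid_approximable_finite_UN:
  fixes A :: "nat \<Rightarrow> ('a \<times> 'b) set"
  assumes "\<And>n. A n \<in> sets (M1 \<Otimes>\<^sub>M M2) \<and> grid_approximable M1 M2 K1 K2 (A n)"
  shows "grid_approximable M1 M2 K1 K2 (\<Union>n<m. A n)"
proof (induction m)
  case 0
  show ?case using grid_approximable_Times[of "{}" "{}"] by simp
next
  case (Suc m)
  have "(\<Union>n<Suc m. A n) = A m \<union> (\<Union>n<m. A n)" by (auto simp: lessThan_Suc)
  then show ?case using Suc assms[of m] assms by (auto intro!: grid_approximable_Un)
qed

lemma grid_approximable_UN:
  fixes A :: "nat \<Rightarrow> ('a \<times> 'b) set"
  assumes A: "\<And>n. A n \<in> sets (M1 \<Otimes>\<^sub>M M2) \<and> grid_approximable M1 M2 K1 K2 (A n)"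
  shows "grid_approximable M1 M2 K1 K2 (\<Union>n. A n)"
  unfolding grid_approximable_def
proof (intro allI impI)
  fix e :: real assume e: "0 < e"
  define K where "K = K1 \<times> K2"
  define B where "B = (\<lambda>m. (\<Union>n<m. A n) \<inter> K)"
  have B_sets: "range B \<subseteq> sets (M1 \<Otimes>\<^sub>M M2)"
    using A K_fin by (auto simp: B_def K_def)
  have "incseq B" unfolding B_def incseq_def by (auto, meson lessThan_iff order_less_le_trans)
  have UA_fin: "(\<Union>n. A n) \<inter> K \<in> fmeasurable (M1 \<Otimes>\<^sub>M M2)"
    using A K_fin by (intro fmeasurableI2[OF K_fin]) (auto simp: K_def)
  have "(\<Union>m. B m) = (\<Union>n. A n) \<inter> K" by (auto simp: B_def)
  then have "(\<lambda>m. measure (M1 \<Otimes>\<^sub>M M2) (B m)) \<longlonglongrightarrow> measure (M1 \<Otimes>\<^sub>M M2) ((\<Union>n. A n) \<inter> K)"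
    using Lim_measure_incseq[OF B_sets \<open>incseq B\<close>] UA_fin by (simp add: fmeasurable_def less_top)
  then have "\<forall>\<^sub>F m in sequentially.
      measure (M1 \<Otimes>\<^sub>M M2) ((\<Union>n. A n) \<inter> K) - e / 2 < measure (M1 \<Otimes>\<^sub>M M2) (B m)"
    using e by (intro order_tendstoD(1)) auto
  then obtain m where m: "measure (M1 \<Otimes>\<^sub>M M2) ((\<Union>n. A n) \<inter> K) - e / 2 < measure (M1 \<Otimes>\<^sub>M M2) (B m)"
    by (auto simp: eventually_sequentially)
  obtain PP QQ U where a: "measurable_partition M1 K1 PP" "measurable_partition M2 K2 QQ"
    "grid_set PP QQ U" "measure (M1 \<Otimes>\<^sub>M M2) (sym_diff (B m) U) < e / 2"
    using grid_approximable_finite_UN[OF A, where m = m] e unfolding grid_approximable_def B_def K_def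
    by (meson half_gt_zero)
  have Bm: "B m \<subseteq> (\<Union>n. A n) \<inter> K" "B m \<in> sets (M1 \<Otimes>\<^sub>M M2)"
    using B_sets by (auto simp: B_def)
  have U_fin: "U \<in> fmeasurable (M1 \<Otimes>\<^sub>M M2)" by (rule grid_set_fmeasurable[OF a(1-3)])
  have Bm_fin: "B m \<in> fmeasurable (M1 \<Otimes>\<^sub>M M2)" using fmeasurableI2[OF UA_fin Bm] .
  have "measure (M1 \<Otimes>\<^sub>M M2) (sym_diff ((\<Union>n. A n) \<inter> K) U)
      \<le> measure (M1 \<Otimes>\<^sub>M M2) (sym_diff (B m) U) + measure (M1 \<Otimes>\<^sub>M M2) ((\<Union>n. A n) \<inter> K - B m)"
    using UA_fin U_fin Bm Bm_fin by (intro measure_subset_Un_le) (auto intro: fmeasurable_Diff)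
  also have "measure (M1 \<Otimes>\<^sub>M M2) ((\<Union>n. A n) \<inter> K - B m)
      = measure (M1 \<Otimes>\<^sub>M M2) ((\<Union>n. A n) \<inter> K) - measure (M1 \<Otimes>\<^sub>M M2) (B m)"
    using UA_fin Bm by (intro measure_Diff) (auto simp: fmeasurableD2)
  finally have "measure (M1 \<Otimes>\<^sub>M M2) (sym_diff ((\<Union>n. A n) \<inter> K) U) < e"
    using a(4) m by linarith
  then show "\<exists>PP QQ U. measurable_partition M1 K1 PP \<and> measurable_partition M2 K2 QQ \<and>
      grid_set PP QQ U \<and> measure (M1 \<Otimes>\<^sub>M M2) (sym_diff ((\<Union>n. A n) \<inter> K1 \<times> K2) U) < e"
    using a(1-3) by (auto simp: K_def)
qed

lemma sets_pair_measure_grid_approximable: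
  assumes "A \<in> sets (M1 \<Otimes>\<^sub>M M2)"
  shows "grid_approximable M1 M2 K1 K2 A"
proof -
  have "A \<in> sigma_sets UNIV {a \<times> b | a b. a \<in> sets M1 \<and> b \<in> sets M2}"
    using assms space1 space2 by (simp add: sets_pair_measure)
  then show ?thesis
  proof (induction rule: sigma_sets.induct)
    case (Basic a)
    then show ?case by (auto intro: grid_approximable_Times)
  next
    case Empty
    show ?case using grid_approximable_Times[of "{}" "{}"] by simp
  next
    case (Compl a)
    show ?case by (rule grid_approximable_Compl[OF Compl.IH])
  next
    case (Union a)
    have "a i \<in> sets (M1 \<Otimes>\<^sub>M M2)" for i
      using Union(1)[of i] space1 space2 by (simp add: sets_pair_measure)
    then show ?case using Union(2) by (intro grid_approximable_UN) auto
  qed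
qed

lemma grid_approximation_family:
  fixes A :: "nat \<Rightarrow> ('a \<times> 'b) set" and k :: nat
  assumes A: "\<forall>i<k. A i \<in> sets (M1 \<Otimes>\<^sub>M M2)" and e: "0 < e"
  shows "\<exists>PP QQ U. measurable_partition M1 K1 PP \<and> measurable_partition M2 K2 QQ \<and>
    (\<forall>i<k. grid_set PP QQ (U i) \<and> measure (M1 \<Otimes>\<^sub>M M2) (sym_diff (A i \<inter> K1 \<times> K2) (U i)) < e)"
  using A
proof (induction k)
  case 0
  have "measurable_partition M1 K1 {K1}" "measurable_partition M2 K2 {K2}"
    using K1 K2 by (simp_all add: measurable_partition_def)
  then show ?case by blast
next
  case (Suc k)
  then obtain PP QQ U where a: "measurable_partition M1 K1 PP" "measurable_partition M2 K2 QQ"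
    "\<forall>i<k. grid_set PP QQ (U i) \<and> measure (M1 \<Otimes>\<^sub>M M2) (sym_diff (A i \<inter> K1 \<times> K2) (U i)) < e"
    by auto
  have "grid_approximable M1 M2 K1 K2 (A k)"
    using sets_pair_measure_grid_approximable Suc.prems by simp
  then obtain PP' QQ' U' where b: "measurable_partition M1 K1 PP'" "measurable_partition M2 K2 QQ'"
    "grid_set PP' QQ' U'" "measure (M1 \<Otimes>\<^sub>M M2) (sym_diff (A k \<inter> K1 \<times> K2) U') < e"
    using e unfolding grid_approximable_def by meson
  define PP'' where "PP'' = common_refinement PP PP'"
  define QQ'' where "QQ'' = common_refinement QQ QQ'"
  have P: "measurable_partition M1 K1 PP''" "measurable_partition M2 K2 QQ''"
    using a b by (simp_all add: PP''_def QQ''_def measurable_partition_common_refinement)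
  have "grid_set PP'' QQ'' (U i)" if "i < k" for i
    using grid_set_refine[OF a(1) P(1) a(2) P(2)] a(3) that
    by (auto simp: PP''_def QQ''_def dest: common_refinement_subset)
  moreover have "grid_set PP'' QQ'' U'"
    using grid_set_refine[OF b(1) P(1) b(2) P(2) _ _ b(3)]
    by (auto simp: PP''_def QQ''_def dest: common_refinement_subset)
  ultimately have "\<forall>i<Suc k. grid_set PP'' QQ'' ((U(k := U')) i) \<and>
      measure (M1 \<Otimes>\<^sub>M M2) (sym_diff (A i \<inter> K1 \<times> K2) ((U(k := U')) i)) < e"
    using a(3) b(4) by (auto simp: less_Suc_eq)
  with P show ?case by blast
qed

end

lemma exists_Times_exhaustion:
  fixes A :: "nat \<Rightarrow> ('a \<times> 'b) set"
  assumes M1: "sigma_finite_measure M1" and M2: "sigma_finite_measure M2"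
    and space1: "space M1 = UNIV" and space2: "space M2 = UNIV"
    and A: "\<forall>i<k. A i \<in> fmeasurable (M1 \<Otimes>\<^sub>M M2)" and e: "0 < e"
  obtains K1 K2 where "K1 \<in> fmeasurable M1" "K2 \<in> fmeasurable M2"
    "\<forall>i<k. measure (M1 \<Otimes>\<^sub>M M2) (A i - K1 \<times> K2) < e"
proof -
  interpret P: pair_sigma_finite M1 M2 using M1 M2 by (simp add: pair_sigma_finite_def)
  obtain C1 where C1: "range C1 \<subseteq> sets M1" "(\<Union>i. C1 i) = space M1" "\<And>i. emeasure M1 (C1 i) \<noteq> \<infinity>"
    "incseq C1"
    using P.M1.sigma_finite_incseq by blast
  obtain C2 where C2: "range C2 \<subseteq> sets M2" "(\<Union>i. C2 i) = space M2" "\<And>i. emeasure M2 (C2 i) \<noteq> \<infinity>"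
    "incseq C2"
    using P.M2.sigma_finite_incseq by blast
  define C where "C n = C1 n \<times> C2 n" for n
  have C_sets: "C n \<in> sets (M1 \<Otimes>\<^sub>M M2)" for n using C1 C2 by (auto simp: C_def)
  have "incseq C" using C1(4) C2(4) unfolding C_def incseq_def by (meson Sigma_mono)
  have "(\<Union>n. C n) = UNIV"
  proof -
    have "(x, y) \<in> (\<Union>n. C n)" for x y
    proof -
      obtain n1 n2 where "x \<in> C1 n1" "y \<in> C2 n2" using C1(2) C2(2) space1 space2 by blast
      then have "x \<in> C1 (max n1 n2)" "y \<in> C2 (max n1 n2)"
        using C1(4) C2(4) unfolding incseq_def by (meson max.cobounded1 max.cobounded2 subsetD)+
      then show ?thesis by (auto simp: C_def)
    qed
    then show ?thesis by auto
  qed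
  have lim: "(\<lambda>n. measure (M1 \<Otimes>\<^sub>M M2) (A i - C n)) \<longlonglongrightarrow> 0" if i: "i < k" for i
  proof -
    have empty: "(\<Inter>n. A i - C n) = {}" using \<open>(\<Union>n. C n) = UNIV\<close> by auto
    have "range (\<lambda>n. A i - C n) \<subseteq> sets (M1 \<Otimes>\<^sub>M M2)"
      using A C_sets i by (auto intro: fmeasurableD)
    moreover have "decseq (\<lambda>n. A i - C n)" using \<open>incseq C\<close> by (auto simp: incseq_def decseq_def)
    moreover have "emeasure (M1 \<Otimes>\<^sub>M M2) (A i - C n) \<noteq> \<infinity>" for n
      using A C_sets i fmeasurable_Diff[of "A i" "M1 \<Otimes>\<^sub>M M2" "C n"] by (auto simp: fmeasurable_def)
    ultimately have "(\<lambda>n. measure (M1 \<Otimes>\<^sub>M M2) (A i - C n)) \<longlonglongrightarrow> measure (M1 \<Otimes>\<^sub>M M2) (\<Inter>n. A i - C n)"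
      by (rule Lim_measure_decseq)
    then show ?thesis unfolding empty by simp
  qed
  have "\<forall>\<^sub>F n in sequentially. \<forall>i\<in>{..<k}. measure (M1 \<Otimes>\<^sub>M M2) (A i - C n) < e"
  proof (rule eventually_ball_finite)
    show "\<forall>i\<in>{..<k}. \<forall>\<^sub>F n in sequentially. measure (M1 \<Otimes>\<^sub>M M2) (A i - C n) < e"
      using order_tendstoD(2)[OF lim] e by simp
  qed simp
  then obtain n where "\<forall>i<k. measure (M1 \<Otimes>\<^sub>M M2) (A i - C1 n \<times> C2 n) < e"
    by (auto simp: eventually_sequentially C_def)
  moreover have "C1 n \<in> fmeasurable M1" "C2 n \<in> fmeasurable M2"
    using C1 C2 by (auto simp: fmeasurable_def less_top)
  ultimately show thesis by (intro that)
qed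

lemma exists_grid_approximation:
  fixes A :: "nat \<Rightarrow> ('a \<times> 'b) set"
  assumes M1: "sigma_finite_measure M1" and M2: "sigma_finite_measure M2"
    and space1: "space M1 = UNIV" and space2: "space M2 = UNIV"
    and A: "\<forall>i<k. A i \<in> fmeasurable (M1 \<Otimes>\<^sub>M M2)" and e: "0 < e"
  obtains K1 K2 PP QQ U where "K1 \<in> fmeasurable M1" "K2 \<in> fmeasurable M2"
    "measurable_partition M1 K1 PP" "measurable_partition M2 K2 QQ"
    "\<forall>i<k. grid_set PP QQ (U i) \<and> measure (M1 \<Otimes>\<^sub>M M2) (sym_diff (A i) (U i)) < e"
proof -
  have "0 < e / 2" using e by simp
  then obtain K1 K2 where K1: "K1 \<in> fmeasurable M1" and K2: "K2 \<in> fmeasurable M2"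
    and K: "\<forall>i<k. measure (M1 \<Otimes>\<^sub>M M2) (A i - K1 \<times> K2) < e / 2"
    by (rule exists_Times_exhaustion[OF M1 M2 space1 space2 A])
  have K_fin: "K1 \<times> K2 \<in> fmeasurable (M1 \<Otimes>\<^sub>M M2)" using M2 K1 K2 by (rule fmeasurable_Times)
  have A_sets: "\<forall>i<k. A i \<in> sets (M1 \<Otimes>\<^sub>M M2)" using A by auto
  obtain PP QQ U where grid: "measurable_partition M1 K1 PP" "measurable_partition M2 K2 QQ"
    "\<forall>i<k. grid_set PP QQ (U i) \<and> measure (M1 \<Otimes>\<^sub>M M2) (sym_diff (A i \<inter> K1 \<times> K2) (U i)) < e / 2"
    using grid_approximation_family[OF fmeasurableD[OF K1] fmeasurableD[OF K2] K_fin space1 space2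
        A_sets \<open>0 < e / 2\<close>] by blast
  have "measure (M1 \<Otimes>\<^sub>M M2) (sym_diff (A i) (U i)) < e" if i: "i < k" for i
  proof -
    have U: "U i \<in> fmeasurable (M1 \<Otimes>\<^sub>M M2)"
      using grid_set_fmeasurable[OF fmeasurableD[OF K1] fmeasurableD[OF K2] K_fin space1 space2 grid(1,2)]
        grid(3) i by auto
    have "measure (M1 \<Otimes>\<^sub>M M2) (sym_diff (A i) (U i))
        \<le> measure (M1 \<Otimes>\<^sub>M M2) (sym_diff (A i \<inter> K1 \<times> K2) (U i)) + measure (M1 \<Otimes>\<^sub>M M2) (A i - K1 \<times> K2)"
      using A i U K_fin by (intro measure_subset_Un_le) (auto intro: fmeasurable_sym_diff fmeasurable.Int)
    then show ?thesis using grid(3) K i by fastforce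
  qed
  then show thesis using K1 K2 grid by (intro that[of K1 K2 PP QQ U]) auto
qed

lemma measurable_partition_enumerate:
  assumes PP: "measurable_partition M K PP" and K: "K \<in> fmeasurable M"
  obtains n :: nat and P :: "nat \<Rightarrow> 'a set" where "bij_betw P {..<n} PP" "\<forall>p<n. P p \<in> fmeasurable M \<and> P p \<subseteq> K"
    "disjoint_family_on P {..<n}"
proof -
  have "finite PP" using PP by (simp add: measurable_partition_def)
  then obtain P where P: "bij_betw P {..<card PP} PP"
    using ex_bij_betw_nat_finite atLeast0LessThan by metis
  have "P p \<in> fmeasurable M \<and> P p \<subseteq> K" if "p < card PP" for p
  proof -
    have "P p \<in> PP" using bij_betwE[OF P] that by blast
    then have "P p \<subseteq> K" "P p \<in> sets M"
      using PP measurable_partition_subset[OF PP] by (auto simp: measurable_partition_def)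
    then show ?thesis using fmeasurableI2[OF K] by blast
  qed
  moreover have "disjoint_family_on P {..<card PP}"
    using PP bij_betw_imp_inj_on[OF P] bij_betwE[OF P]
    unfolding disjoint_family_on_def measurable_partition_def pairwise_def disjnt_def inj_on_def
    by metis
  ultimately show thesis by (intro that[OF P]) auto
qed

definition cell_union :: "(nat \<Rightarrow> 'a set) \<Rightarrow> (nat \<Rightarrow> 'b set) \<Rightarrow> (nat \<times> nat) set \<Rightarrow> ('a \<times> 'b) set" where
  "cell_union P Q S = (\<Union>(p, q)\<in>S. P p \<times> Q q)"

lemma fmeasurable_cell_union:
  assumes "sigma_finite_measure M2"
    and "\<forall>p<n1. P p \<in> fmeasurable M1" "\<forall>q<n2. Q q \<in> fmeasurable M2" "S \<subseteq> {..<n1} \<times> {..<n2}"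
  shows "cell_union P Q S \<in> fmeasurable (M1 \<Otimes>\<^sub>M M2)"
  unfolding cell_union_def using assms
  by (intro fmeasurable.finite_UN) (auto intro: fmeasurable_Times finite_subset[OF _ finite_SigmaI])

lemma grid_set_eq_cell_union:
  assumes "bij_betw P {..<n1} PP" "bij_betw Q {..<n2} QQ" "grid_set PP QQ U"
  shows "U = cell_union P Q {s \<in> {..<n1} \<times> {..<n2}. P (fst s) \<times> Q (snd s) \<subseteq> U}"
proof
  show "U \<subseteq> cell_union P Q {s \<in> {..<n1} \<times> {..<n2}. P (fst s) \<times> Q (snd s) \<subseteq> U}"
  proof
    fix x assume "x \<in> U"
    then obtain P0 Q0 where PQ: "P0 \<in> PP" "Q0 \<in> QQ" "x \<in> P0 \<times> Q0" "P0 \<times> Q0 \<subseteq> U"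
      using grid_setD[OF assms(3)] by blast
    obtain p q where "p < n1" "P0 = P p" "q < n2" "Q0 = Q q"
      using bij_betw_imp_surj_on[OF assms(1)] bij_betw_imp_surj_on[OF assms(2)] PQ(1,2) by force
    then show "x \<in> cell_union P Q {s \<in> {..<n1} \<times> {..<n2}. P (fst s) \<times> Q (snd s) \<subseteq> U}"
      using PQ(3,4) unfolding cell_union_def by force
  qed
qed (auto simp: cell_union_def)

lemma exists_cell_union_approximation:
  fixes A :: "nat \<Rightarrow> ('a \<times> 'b) set"
  assumes M1: "sigma_finite_measure M1" and M2: "sigma_finite_measure M2"
    and space1: "space M1 = UNIV" and space2: "space M2 = UNIV"
    and A: "\<forall>i<k. A i \<in> fmeasurable (M1 \<Otimes>\<^sub>M M2)" and e: "0 < e"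
  obtains K1 K2 n1 n2 P Q S where "K1 \<in> fmeasurable M1" "K2 \<in> fmeasurable M2"
    "\<forall>p<n1. P p \<in> fmeasurable M1 \<and> P p \<subseteq> K1" "disjoint_family_on P {..<n1}"
    "\<forall>q<n2. Q q \<in> fmeasurable M2 \<and> Q q \<subseteq> K2" "disjoint_family_on Q {..<n2}"
    "\<forall>i<k. S i \<subseteq> {..<n1} \<times> {..<n2} \<and>
       measure (M1 \<Otimes>\<^sub>M M2) (sym_diff (A i) (cell_union P Q (S i))) < e"
proof -
  obtain K1 K2 PP QQ U where K: "K1 \<in> fmeasurable M1" "K2 \<in> fmeasurable M2"
    and PP: "measurable_partition M1 K1 PP" and QQ: "measurable_partition M2 K2 QQ"
    and U: "\<forall>i<k. grid_set PP QQ (U i) \<and> measure (M1 \<Otimes>\<^sub>M M2) (sym_diff (A i) (U i)) < e"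
    by (rule exists_grid_approximation[OF M1 M2 space1 space2 A e])
  obtain n1 :: nat and P where P: "bij_betw P {..<n1} PP" "\<forall>p<n1. P p \<in> fmeasurable M1 \<and> P p \<subseteq> K1"
    "disjoint_family_on P {..<n1}"
    by (rule measurable_partition_enumerate[OF PP K(1)])
  obtain n2 :: nat and Q where Q: "bij_betw Q {..<n2} QQ" "\<forall>q<n2. Q q \<in> fmeasurable M2 \<and> Q q \<subseteq> K2"
    "disjoint_family_on Q {..<n2}"
    by (rule measurable_partition_enumerate[OF QQ K(2)])
  define S where "S i = {s \<in> {..<n1} \<times> {..<n2}. P (fst s) \<times> Q (snd s) \<subseteq> U i}" for i
  have "\<forall>i<k. S i \<subseteq> {..<n1} \<times> {..<n2} \<and>
      measure (M1 \<Otimes>\<^sub>M M2) (sym_diff (A i) (cell_union P Q (S i))) < e"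
    using U grid_set_eq_cell_union[OF P(1) Q(1)] by (auto simp: S_def)
  with K P Q show thesis by (intro that) auto
qed

section \<open>Diagonal actions\<close>
lemma proj_contained_disjoint_family:
  assumes a0: "a 0 = id" and Y: "measure_preserving_action b N" and AB: "proj_contained a M b N"
    and F: "finite F" and P: "\<forall>p<n. P p \<in> fin_sets M" and disj: "disjoint_family_on P {..<n}"
    and \<rho>: "0 < \<rho>"
  obtains lam D where "0 < lam" "\<forall>p<n. D p \<in> fin_sets N" "disjoint_family_on D {..<n}"
    "corr_close F n \<rho> (corr a M P) lam (corr b N D)"
proof -
  interpret Y: measure_preserving_action b N by (rule Y)
  define mP where "mP = \<bar>maxmeas M n P\<bar>"
  define \<epsilon> where "\<epsilon> = \<rho> / ((1 + 2 * real n) * (mP + 1))"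
  define c where "c = \<epsilon> * mP"
  have mP: "0 \<le> mP" by (simp add: mP_def)
  have \<epsilon>: "0 < \<epsilon>" using \<rho> mP by (simp add: \<epsilon>_def add_pos_nonneg)
  have c: "0 \<le> c" using \<epsilon> by (simp add: c_def mP_def)
  obtain lam P' where lam: "0 < lam" and P': "\<forall>p<n. P' p \<in> fin_sets N"
    and PP': "corr_close (insert 0 F) n (\<epsilon> * maxmeas M n P) (corr a M P) lam (corr b N P')"
    using proj_containedD[OF AB _ P \<epsilon>, of "insert 0 F"] F by blast
  have PP'_c: "corr_close (insert 0 F) n c (corr a M P) lam (corr b N P')"
    using corr_close_mono[OF PP' order_refl] \<epsilon> by (simp add: c_def mP_def)
  have "lam * measure N (P' p \<inter> P' r) \<le> c" if "p < n" "r < n" "p \<noteq> r" for p r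
  proof -
    have "\<bar>corr a M P 0 p r - lam * corr b N P' 0 p r\<bar> \<le> c"
      using PP'_c that unfolding corr_close_def by blast
    moreover have "corr a M P 0 p r = 0" using disj that by (simp add: corr_def a0 disjoint_family_on_def)
    moreover have "corr b N P' 0 p r = measure N (P' p \<inter> P' r)" by (simp add: corr_def Y.act_zero)
    ultimately show ?thesis by simp
  qed
  then have "\<forall>p<n. \<forall>r<n. p \<noteq> r \<longrightarrow> measure N (P' p \<inter> P' r) \<le> c / lam"
    using lam by (simp add: field_simps)
  then have P'D: "corr_close UNIV n (2 * (real n * (c / lam))) (corr b N P') 1 (corr b N (disjointed P'))"
    using P' c lam by (intro Y.corr_close_disjointed) (auto simp: fin_sets_eq_fmeasurable)
  have "corr_close F n c (corr a M P) lam (corr b N P')"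
    by (rule corr_close_mono[OF PP'_c]) auto
  moreover have "corr_close F n (2 * (real n * (c / lam))) (corr b N P') 1 (corr b N (disjointed P'))"
    by (rule corr_close_mono[OF P'D]) auto
  ultimately have "corr_close F n (c + lam * (2 * (real n * (c / lam)))) (corr a M P) (lam * 1)
      (corr b N (disjointed P'))"
    using lam by (intro corr_close_trans) auto
  moreover have "c + lam * (2 * (real n * (c / lam))) = (1 + 2 * real n) * c"
    using lam by (simp add: field_simps)
  moreover have "(1 + 2 * real n) * c = \<rho> * (mP / (mP + 1))"
  proof -
    have "1 + 2 * real n \<noteq> 0" "mP + 1 \<noteq> 0" using mP by linarith+
    then show ?thesis by (simp add: c_def \<epsilon>_def)
  qed
  moreover have "\<rho> * (mP / (mP + 1)) \<le> \<rho>"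
    using \<rho> mP by (intro mult_left_le) auto
  ultimately have "corr_close F n \<rho> (corr a M P) lam (corr b N (disjointed P'))"
    using corr_close_mono by fastforce
  moreover have "\<forall>p<n. disjointed P' p \<in> fin_sets N"
    using P' fmeasurable_disjointed[of n P' N] by (simp add: fin_sets_eq_fmeasurable)
  moreover have "disjoint_family_on (disjointed P') {..<n}"
    using disjoint_family_disjointed by (rule disjoint_family_on_mono[rotated]) simp
  ultimately show thesis using lam that by blast
qed

lemma abs_mult_diff_le:
  fixes x y x' y' r mx my :: real
  assumes "\<bar>x - x'\<bar> \<le> r" "\<bar>y - y'\<bar> \<le> r" "0 \<le> x" "x \<le> mx" "0 \<le> y" "y \<le> my" "r \<le> 1"
  shows "\<bar>x * y - x' * y'\<bar> \<le> r * (mx + my + 1)"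
proof -
  have r: "0 \<le> r" using assms(1) by linarith
  have "\<bar>(x - x') * y\<bar> \<le> r * my"
    unfolding abs_mult using assms r by (intro mult_mono) auto
  moreover have "\<bar>x' * (y - y')\<bar> \<le> (mx + 1) * r"
    unfolding abs_mult using assms r by (intro mult_mono) auto
  moreover have "x * y - x' * y' = (x - x') * y + x' * (y - y')" by (simp add: algebra_simps)
  ultimately show ?thesis by (simp add: algebra_simps)
qed

lemma abs_double_sum_diff_le:
  fixes f g :: "'a \<Rightarrow> 'b \<Rightarrow> real"
  assumes "finite I" "finite J" "\<And>s t. s \<in> I \<Longrightarrow> t \<in> J \<Longrightarrow> \<bar>f s t - g s t\<bar> \<le> B"
  shows "\<bar>(\<Sum>s\<in>I. \<Sum>t\<in>J. f s t) - (\<Sum>s\<in>I. \<Sum>t\<in>J. g s t)\<bar> \<le> real (card I) * real (card J) * B"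
proof -
  have "\<bar>(\<Sum>s\<in>I. \<Sum>t\<in>J. f s t) - (\<Sum>s\<in>I. \<Sum>t\<in>J. g s t)\<bar> = \<bar>\<Sum>s\<in>I. \<Sum>t\<in>J. f s t - g s t\<bar>"
    by (simp add: sum_subtractf)
  also have "\<dots> \<le> (\<Sum>s\<in>I. \<Sum>t\<in>J. \<bar>f s t - g s t\<bar>)"
    by (rule order.trans[OF sum_abs sum_mono[OF sum_abs]])
  also have "\<dots> \<le> (\<Sum>s\<in>I. \<Sum>t\<in>J. B)"
    using assms(3) by (intro sum_mono) auto
  finally show ?thesis by simp
qed

lemma diag_action_image_Times: "diag_action a1 a2 g ` (A \<times> B) = a1 g ` A \<times> a2 g ` B"
  by (auto simp: diag_action_def image_iff)

lemma disjoint_family_on_cells_Int_image: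
  assumes inj: "inj f1" "inj f2" and P: "disjoint_family_on P {..<n1}" and Q: "disjoint_family_on Q {..<n2}"
    and S: "S \<subseteq> {..<n1} \<times> {..<n2}" "S' \<subseteq> {..<n1} \<times> {..<n2}"
  shows "disjoint_family_on (\<lambda>(s, t). (P (fst s) \<inter> f1 ` P (fst t)) \<times> (Q (snd s) \<inter> f2 ` Q (snd t)))
    (S \<times> S')"
proof -
  define R where "R = (\<lambda>(s, t). (P (fst s) \<inter> f1 ` P (fst t)) \<times> (Q (snd s) \<inter> f2 ` Q (snd t)))"
  have "R x \<inter> R y = {}" if x: "x \<in> S \<times> S'" and y: "y \<in> S \<times> S'" and "x \<noteq> y" for x y
  proof -
    have ix: "fst (fst x) < n1" "snd (fst x) < n2" "fst (snd x) < n1" "snd (snd x) < n2"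
      and iy: "fst (fst y) < n1" "snd (fst y) < n2" "fst (snd y) < n1" "snd (snd y) < n2"
      using x y S by auto
    from \<open>x \<noteq> y\<close> consider "fst (fst x) \<noteq> fst (fst y)" | "snd (fst x) \<noteq> snd (fst y)"
      | "fst (snd x) \<noteq> fst (snd y)" | "snd (snd x) \<noteq> snd (snd y)"
      by (metis prod.expand)
    then show ?thesis
    proof cases
      case 1
      then have "P (fst (fst x)) \<inter> P (fst (fst y)) = {}"
        using P ix iy unfolding disjoint_family_on_def by blast
      then show ?thesis by (auto simp: R_def case_prod_beta)
    next
      case 2
      then have "Q (snd (fst x)) \<inter> Q (snd (fst y)) = {}"
        using Q ix iy unfolding disjoint_family_on_def by blast
      then show ?thesis by (auto simp: R_def case_prod_beta)
    next
      case 3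
      then have "P (fst (snd x)) \<inter> P (fst (snd y)) = {}"
        using P ix iy unfolding disjoint_family_on_def by blast
      then have "f1 ` P (fst (snd x)) \<inter> f1 ` P (fst (snd y)) = {}"
        using inj(1) by (simp add: image_Int[symmetric])
      then show ?thesis by (auto simp: R_def case_prod_beta)
    next
      case 4
      then have "Q (snd (snd x)) \<inter> Q (snd (snd y)) = {}"
        using Q ix iy unfolding disjoint_family_on_def by blast
      then have "f2 ` Q (snd (snd x)) \<inter> f2 ` Q (snd (snd y)) = {}"
        using inj(2) by (simp add: image_Int[symmetric])
      then show ?thesis by (auto simp: R_def case_prod_beta)
    qed
  qed
  then show ?thesis unfolding disjoint_family_on_def R_def by blast
qed

lemma measure_cell_union_Int_image:
  assumes X1: "measure_preserving_action a1 M1" and X2: "measure_preserving_action a2 M2"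
    and P: "\<forall>p<n1. P p \<in> fmeasurable M1" "disjoint_family_on P {..<n1}"
    and Q: "\<forall>q<n2. Q q \<in> fmeasurable M2" "disjoint_family_on Q {..<n2}"
    and S: "S \<subseteq> {..<n1} \<times> {..<n2}" "S' \<subseteq> {..<n1} \<times> {..<n2}"
  shows "measure (M1 \<Otimes>\<^sub>M M2) (cell_union P Q S \<inter> diag_action a1 a2 g ` cell_union P Q S')
    = (\<Sum>s\<in>S. \<Sum>t\<in>S'. corr a1 M1 P g (fst s) (fst t) * corr a2 M2 Q g (snd s) (snd t))"
proof -
  interpret X1: measure_preserving_action a1 M1 by (rule X1)
  interpret X2: measure_preserving_action a2 M2 by (rule X2)
  define R where "R = (\<lambda>(s, t). (P (fst s) \<inter> a1 g ` P (fst t)) \<times> (Q (snd s) \<inter> a2 g ` Q (snd t)))"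
  have "diag_action a1 a2 g ` cell_union P Q S' = (\<Union>(p, q)\<in>S'. a1 g ` P p \<times> a2 g ` Q q)"
    by (simp add: cell_union_def image_UN diag_action_image_Times case_prod_beta)
  then have eq: "cell_union P Q S \<inter> diag_action a1 a2 g ` cell_union P Q S' = (\<Union>x\<in>S \<times> S'. R x)"
    unfolding cell_union_def R_def by force
  have R_fin: "R x \<in> fmeasurable (M1 \<Otimes>\<^sub>M M2)"
    and R_measure: "measure (M1 \<Otimes>\<^sub>M M2) (R x) = corr a1 M1 P g (fst (fst x)) (fst (snd x)) *
        corr a2 M2 Q g (snd (fst x)) (snd (snd x))" if "x \<in> S \<times> S'" for x
  proof -
    have "P (fst (fst x)) \<inter> a1 g ` P (fst (snd x)) \<in> fmeasurable M1"
      using P(1) S that by (intro fmeasurable.Int X1.fmeasurable_image) auto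
    moreover have "Q (snd (fst x)) \<inter> a2 g ` Q (snd (snd x)) \<in> fmeasurable M2"
      using Q(1) S that by (intro fmeasurable.Int X2.fmeasurable_image) auto
    ultimately show "R x \<in> fmeasurable (M1 \<Otimes>\<^sub>M M2)"
      "measure (M1 \<Otimes>\<^sub>M M2) (R x) = corr a1 M1 P g (fst (fst x)) (fst (snd x)) *
        corr a2 M2 Q g (snd (fst x)) (snd (snd x))"
      by (auto simp: R_def corr_def case_prod_beta fmeasurable_def X2.emeasure_pair_measure_Times
          ennreal_mult_less_top measure_def enn2real_mult)
  qed
  have disj: "disjoint_family_on R (S \<times> S')"
    unfolding R_def by (rule disjoint_family_on_cells_Int_image[OF X1.inj_act X2.inj_act P(2) Q(2) S])
  have "measure (M1 \<Otimes>\<^sub>M M2) (\<Union>x\<in>S \<times> S'. R x) = (\<Sum>x\<in>S \<times> S'. measure (M1 \<Otimes>\<^sub>M M2) (R x))"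
  proof (rule measure_finite_Union[OF _ _ disj])
    show "finite (S \<times> S')"
      using S by (meson finite_SigmaI finite_lessThan finite_subset)
  qed (use R_fin in \<open>auto simp: fmeasurableD2\<close>)
  also have "\<dots> = (\<Sum>s\<in>S. \<Sum>t\<in>S'. corr a1 M1 P g (fst s) (fst t) * corr a2 M2 Q g (snd s) (snd t))"
    by (simp add: R_measure sum.cartesian_product case_prod_beta)
  finally show ?thesis unfolding eq .
qed

lemma corr_close_cell_union:
  assumes X1: "measure_preserving_action a1 M1" and X2: "measure_preserving_action a2 M2"
    and Y1: "measure_preserving_action b1 N1" and Y2: "measure_preserving_action b2 N2"
    and P: "\<forall>p<n1. P p \<in> fmeasurable M1" "disjoint_family_on P {..<n1}"
    and Q: "\<forall>q<n2. Q q \<in> fmeasurable M2" "disjoint_family_on Q {..<n2}"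
    and D1: "\<forall>p<n1. D1 p \<in> fmeasurable N1" "disjoint_family_on D1 {..<n1}"
    and D2: "\<forall>q<n2. D2 q \<in> fmeasurable N2" "disjoint_family_on D2 {..<n2}"
    and PD: "corr_close F n1 \<rho> (corr a1 M1 P) lam1 (corr b1 N1 D1)"
    and QD: "corr_close F n2 \<rho> (corr a2 M2 Q) lam2 (corr b2 N2 D2)"
    and \<rho>: "0 \<le> \<rho>" "\<rho> \<le> 1"
    and mP: "0 \<le> mP" "\<forall>p<n1. measure M1 (P p) \<le> mP" and mQ: "0 \<le> mQ" "\<forall>q<n2. measure M2 (Q q) \<le> mQ"
    and S: "\<forall>i<k. S i \<subseteq> {..<n1} \<times> {..<n2}"
  shows "corr_close F k (real ((n1 * n2) ^ 2) * (\<rho> * (mP + mQ + 1)))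
    (corr (diag_action a1 a2) (M1 \<Otimes>\<^sub>M M2) (\<lambda>i. cell_union P Q (S i))) (lam1 * lam2)
    (corr (diag_action b1 b2) (N1 \<Otimes>\<^sub>M N2) (\<lambda>i. cell_union D1 D2 (S i)))"
  unfolding corr_close_def
proof (intro allI impI ballI)
  fix i j \<gamma> assume ij: "i < k" "j < k" and \<gamma>: "\<gamma> \<in> F"
  define x where "x s t = corr a1 M1 P \<gamma> (fst s) (fst t)" for s t :: "nat \<times> nat"
  define y where "y s t = corr a2 M2 Q \<gamma> (snd s) (snd t)" for s t :: "nat \<times> nat"
  define x' where "x' s t = lam1 * corr b1 N1 D1 \<gamma> (fst s) (fst t)" for s t :: "nat \<times> nat"
  define y' where "y' s t = lam2 * corr b2 N2 D2 \<gamma> (snd s) (snd t)" for s t :: "nat \<times> nat"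
  have lhs: "corr (diag_action a1 a2) (M1 \<Otimes>\<^sub>M M2) (\<lambda>i. cell_union P Q (S i)) \<gamma> i j
      = (\<Sum>s\<in>S i. \<Sum>t\<in>S j. x s t * y s t)"
    unfolding corr_def[of "diag_action a1 a2"] x_def y_def
    by (rule measure_cell_union_Int_image[OF X1 X2 P Q]) (use S ij in auto)
  have "corr (diag_action b1 b2) (N1 \<Otimes>\<^sub>M N2) (\<lambda>i. cell_union D1 D2 (S i)) \<gamma> i j
      = (\<Sum>s\<in>S i. \<Sum>t\<in>S j. corr b1 N1 D1 \<gamma> (fst s) (fst t) * corr b2 N2 D2 \<gamma> (snd s) (snd t))"
    unfolding corr_def[of "diag_action b1 b2"]
    by (rule measure_cell_union_Int_image[OF Y1 Y2 D1 D2]) (use S ij in auto)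
  then have rhs: "lam1 * lam2 * corr (diag_action b1 b2) (N1 \<Otimes>\<^sub>M N2) (\<lambda>i. cell_union D1 D2 (S i)) \<gamma> i j
      = (\<Sum>s\<in>S i. \<Sum>t\<in>S j. x' s t * y' s t)"
    by (simp add: x'_def y'_def sum_distrib_left algebra_simps)
  have term_le: "\<bar>x s t * y s t - x' s t * y' s t\<bar> \<le> \<rho> * (mP + mQ + 1)"
    if "s \<in> S i" "t \<in> S j" for s t
  proof (rule abs_mult_diff_le)
    have "s \<in> {..<n1} \<times> {..<n2}" "t \<in> {..<n1} \<times> {..<n2}" using S ij that by blast+
    then have st: "fst s < n1" "snd s < n2" "fst t < n1" "snd t < n2" by (simp_all add: mem_Times_iff)
    show "\<bar>x s t - x' s t\<bar> \<le> \<rho>" "\<bar>y s t - y' s t\<bar> \<le> \<rho>"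
      using PD QD st \<gamma> by (auto simp: corr_close_def x_def x'_def y_def y'_def)
    show "0 \<le> x s t" "0 \<le> y s t" by (simp_all add: x_def y_def corr_def)
    have "x s t \<le> measure M1 (P (fst s))" "y s t \<le> measure M2 (Q (snd s))"
      unfolding x_def y_def corr_def using P(1) Q(1) st by (simp_all add: measure_Int_le)
    moreover have "measure M1 (P (fst s)) \<le> mP" "measure M2 (Q (snd s)) \<le> mQ"
      using mP(2) mQ(2) st by blast+
    ultimately show "x s t \<le> mP" "y s t \<le> mQ" by linarith+
  qed (fact \<rho>(2))
  have fin: "finite (S l)" if "l < k" for l
    using S that by (meson finite_SigmaI finite_lessThan finite_subset)
  have "\<bar>(\<Sum>s\<in>S i. \<Sum>t\<in>S j. x s t * y s t) - (\<Sum>s\<in>S i. \<Sum>t\<in>S j. x' s t * y' s t)\<bar>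
      \<le> real (card (S i)) * real (card (S j)) * (\<rho> * (mP + mQ + 1))"
    using abs_double_sum_diff_le[OF fin[OF ij(1)] fin[OF ij(2)] term_le] .
  also have "\<dots> \<le> real ((n1 * n2) ^ 2) * (\<rho> * (mP + mQ + 1))"
  proof (rule mult_right_mono)
    have "card (S i) * card (S j) \<le> (n1 * n2) * (n1 * n2)"
      using S ij by (intro mult_le_mono) (auto dest!: card_mono[rotated])
    then show "real (card (S i)) * real (card (S j)) \<le> real ((n1 * n2) ^ 2)"
      by (simp add: power2_eq_square flip: of_nat_mult)
    show "0 \<le> \<rho> * (mP + mQ + 1)"
      using \<rho> mP mQ by simp
  qed
  finally show "\<bar>corr (diag_action a1 a2) (M1 \<Otimes>\<^sub>M M2) (\<lambda>i. cell_union P Q (S i)) \<gamma> i j -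
      lam1 * lam2 * corr (diag_action b1 b2) (N1 \<Otimes>\<^sub>M N2) (\<lambda>i. cell_union D1 D2 (S i)) \<gamma> i j\<bar>
      \<le> real ((n1 * n2) ^ 2) * (\<rho> * (mP + mQ + 1))"
    unfolding lhs rhs .
qed

lemma proj_contained_cell_union:
  assumes X1: "measure_preserving_action a1 M1" and X2: "measure_preserving_action a2 M2"
    and Y1: "measure_preserving_action b1 N1" and Y2: "measure_preserving_action b2 N2"
    and h1: "proj_contained a1 M1 b1 N1" and h2: "proj_contained a2 M2 b2 N2" and F: "finite F"
    and P: "\<forall>p<n1. P p \<in> fmeasurable M1 \<and> measure M1 (P p) \<le> mP" "disjoint_family_on P {..<n1}"
    and Q: "\<forall>q<n2. Q q \<in> fmeasurable M2 \<and> measure M2 (Q q) \<le> mQ" "disjoint_family_on Q {..<n2}"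
    and mPQ: "0 \<le> mP" "0 \<le> mQ" and S: "\<forall>i<k. S i \<subseteq> {..<n1} \<times> {..<n2}" and \<eta>: "0 < \<eta>"
  obtains lam D1 D2 where "0 < lam" "\<forall>p<n1. D1 p \<in> fmeasurable N1" "\<forall>q<n2. D2 q \<in> fmeasurable N2"
    "corr_close F k \<eta> (corr (diag_action a1 a2) (M1 \<Otimes>\<^sub>M M2) (\<lambda>i. cell_union P Q (S i)))
      lam (corr (diag_action b1 b2) (N1 \<Otimes>\<^sub>M N2) (\<lambda>i. cell_union D1 D2 (S i)))"
proof -
  define C where "C = real ((n1 * n2) ^ 2)"
  define \<rho> where "\<rho> = min 1 (\<eta> / ((C + 1) * (mP + mQ + 1)))"
  have "0 \<le> C" by (simp add: C_def)
  then have C: "0 \<le> C" "C + 1 \<noteq> 0" "mP + mQ + 1 \<noteq> 0" using mPQ by linarith+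
  have \<rho>: "0 < \<rho>" "\<rho> \<le> 1" using \<eta> mPQ C by (simp_all add: \<rho>_def)
  have "C * (\<rho> * (mP + mQ + 1)) \<le> (C + 1) * (\<eta> / ((C + 1) * (mP + mQ + 1)) * (mP + mQ + 1))"
    using \<rho> mPQ C by (intro mult_mono mult_right_mono) (auto simp: \<rho>_def)
  then have C\<rho>: "C * (\<rho> * (mP + mQ + 1)) \<le> \<eta>" using C by simp
  obtain lam1 D1 where "0 < lam1" and D1: "\<forall>p<n1. D1 p \<in> fmeasurable N1" "disjoint_family_on D1 {..<n1}"
    and PD: "corr_close F n1 \<rho> (corr a1 M1 P) lam1 (corr b1 N1 D1)"
    using proj_contained_disjoint_family[OF measure_preserving_action.act_zero[OF X1] Y1 h1 F _ P(2) \<rho>(1)] P(1)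
    by (auto simp: fin_sets_eq_fmeasurable)
  obtain lam2 D2 where "0 < lam2" and D2: "\<forall>q<n2. D2 q \<in> fmeasurable N2" "disjoint_family_on D2 {..<n2}"
    and QD: "corr_close F n2 \<rho> (corr a2 M2 Q) lam2 (corr b2 N2 D2)"
    using proj_contained_disjoint_family[OF measure_preserving_action.act_zero[OF X2] Y2 h2 F _ Q(2) \<rho>(1)] Q(1)
    by (auto simp: fin_sets_eq_fmeasurable)
  have "corr_close F k (C * (\<rho> * (mP + mQ + 1)))
      (corr (diag_action a1 a2) (M1 \<Otimes>\<^sub>M M2) (\<lambda>i. cell_union P Q (S i)))
      (lam1 * lam2) (corr (diag_action b1 b2) (N1 \<Otimes>\<^sub>M N2) (\<lambda>i. cell_union D1 D2 (S i)))"
    unfolding C_def using P Q S \<rho> mPQ D1 D2 PD QD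
    by (intro corr_close_cell_union[OF X1 X2 Y1 Y2]) auto
  then have "corr_close F k \<eta> (corr (diag_action a1 a2) (M1 \<Otimes>\<^sub>M M2) (\<lambda>i. cell_union P Q (S i)))
      (lam1 * lam2) (corr (diag_action b1 b2) (N1 \<Otimes>\<^sub>M N2) (\<lambda>i. cell_union D1 D2 (S i)))"
    by (rule corr_close_mono[OF _ order_refl C\<rho>])
  with \<open>0 < lam1\<close> \<open>0 < lam2\<close> D1(1) D2(1) show thesis
    by (intro that[of "lam1 * lam2" D1 D2]) auto
qed

lemma proj_contained_diag:
  fixes a1 :: "'g::group_add \<Rightarrow> 'x1 \<Rightarrow> 'x1" and a2 :: "'g \<Rightarrow> 'x2 \<Rightarrow> 'x2"
  assumes X1: "measure_preserving_action a1 M1" and X2: "measure_preserving_action a2 M2"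
    and Y1: "measure_preserving_action b1 N1" and Y2: "measure_preserving_action b2 N2"
    and h1: "proj_contained a1 M1 b1 N1" and h2: "proj_contained a2 M2 b2 N2"
  shows "proj_contained (diag_action a1 a2) (M1 \<Otimes>\<^sub>M M2) (diag_action b1 b2) (N1 \<Otimes>\<^sub>M N2)"
proof (rule proj_containedI)
  interpret X1: measure_preserving_action a1 M1 by (rule X1)
  interpret X2: measure_preserving_action a2 M2 by (rule X2)
  interpret Y2: measure_preserving_action b2 N2 by (rule Y2)
  interpret X: measure_preserving_action "diag_action a1 a2" "M1 \<Otimes>\<^sub>M M2"
    by (rule measure_preserving_action_diag[OF X1 X2])
  fix F :: "'g set" and k and A :: "nat \<Rightarrow> ('x1 \<times> 'x2) set" and \<epsilon> :: real
  assume F: "finite F" and A: "\<forall>i<k. A i \<in> fin_sets (M1 \<Otimes>\<^sub>M M2)" and \<epsilon>: "0 < \<epsilon>"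
    and "0 < k" and mA: "0 < maxmeas (M1 \<Otimes>\<^sub>M M2) k A"
  define \<eta> where "\<eta> = \<epsilon> * maxmeas (M1 \<Otimes>\<^sub>M M2) k A / 3"
  have \<eta>: "0 < \<eta>" using \<epsilon> mA by (simp add: \<eta>_def)
  have A_fin: "\<forall>i<k. A i \<in> fmeasurable (M1 \<Otimes>\<^sub>M M2)" using A by (simp add: fin_sets_eq_fmeasurable)
  obtain K1 K2 n1 n2 P Q S where K: "K1 \<in> fmeasurable M1" "K2 \<in> fmeasurable M2"
    and P: "\<forall>p<n1. P p \<in> fmeasurable M1 \<and> P p \<subseteq> K1" "disjoint_family_on P {..<n1}"
    and Q: "\<forall>q<n2. Q q \<in> fmeasurable M2 \<and> Q q \<subseteq> K2" "disjoint_family_on Q {..<n2}"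
    and S: "\<forall>i<k. S i \<subseteq> {..<n1} \<times> {..<n2} \<and>
      measure (M1 \<Otimes>\<^sub>M M2) (sym_diff (A i) (cell_union P Q (S i))) < \<eta>"
    by (rule exists_cell_union_approximation[OF X1.sigma_finite_measure_axioms
          X2.sigma_finite_measure_axioms X1.space_eq X2.space_eq A_fin \<eta>])
  have P': "\<forall>p<n1. P p \<in> fmeasurable M1 \<and> measure M1 (P p) \<le> measure M1 K1"
    and Q': "\<forall>q<n2. Q q \<in> fmeasurable M2 \<and> measure M2 (Q q) \<le> measure M2 K2"
    using P(1) Q(1) K by (auto intro!: measure_mono_fmeasurable)
  have S_grid: "\<forall>i<k. S i \<subseteq> {..<n1} \<times> {..<n2}" using S by blast
  obtain lam D1 D2 where "0 < lam" and D: "\<forall>p<n1. D1 p \<in> fmeasurable N1" "\<forall>q<n2. D2 q \<in> fmeasurable N2"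
    and UV: "corr_close F k \<eta> (corr (diag_action a1 a2) (M1 \<Otimes>\<^sub>M M2) (\<lambda>i. cell_union P Q (S i)))
      lam (corr (diag_action b1 b2) (N1 \<Otimes>\<^sub>M N2) (\<lambda>i. cell_union D1 D2 (S i)))"
    by (rule proj_contained_cell_union[OF X1 X2 Y1 Y2 h1 h2 F P' P(2) Q' Q(2) measure_nonneg measure_nonneg
          S_grid \<eta>])
  have P_fin: "\<forall>p<n1. P p \<in> fmeasurable M1" and Q_fin: "\<forall>q<n2. Q q \<in> fmeasurable M2"
    using P(1) Q(1) by blast+
  have "\<forall>i<k. A i \<in> fmeasurable (M1 \<Otimes>\<^sub>M M2) \<and> cell_union P Q (S i) \<in> fmeasurable (M1 \<Otimes>\<^sub>M M2) \<and>
      measure (M1 \<Otimes>\<^sub>M M2) (sym_diff (A i) (cell_union P Q (S i))) \<le> \<eta>"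
    using A_fin S fmeasurable_cell_union[OF X2.sigma_finite_measure_axioms P_fin Q_fin] by (simp add: less_imp_le)
  from corr_close_trans[OF X.corr_close_sym_diff[OF this] UV]
  have "corr_close F k (\<epsilon> * maxmeas (M1 \<Otimes>\<^sub>M M2) k A) (corr (diag_action a1 a2) (M1 \<Otimes>\<^sub>M M2) A)
      lam (corr (diag_action b1 b2) (N1 \<Otimes>\<^sub>M N2) (\<lambda>i. cell_union D1 D2 (S i)))"
    by (auto simp: \<eta>_def elim!: corr_close_mono)
  moreover have "\<forall>i<k. cell_union D1 D2 (S i) \<in> fin_sets (N1 \<Otimes>\<^sub>M N2)"
    using fmeasurable_cell_union[OF Y2.sigma_finite_measure_axioms D] S
    by (simp add: fin_sets_eq_fmeasurable)
  ultimately show "\<exists>lam B. 0 < lam \<and> (\<forall>i<k. B i \<in> fin_sets (N1 \<Otimes>\<^sub>M N2)) \<and>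
      corr_close F k (\<epsilon> * maxmeas (M1 \<Otimes>\<^sub>M M2) k A) (corr (diag_action a1 a2) (M1 \<Otimes>\<^sub>M M2) A)
        lam (corr (diag_action b1 b2) (N1 \<Otimes>\<^sub>M N2) B)"
    using \<open>0 < lam\<close> by (intro exI[of _ lam] exI[of _ "\<lambda>i. cell_union D1 D2 (S i)"]) simp
qed

theorem lemma2p4:
  fixes a :: "'g::{group_add,countable} \<Rightarrow> 'x::polish_space \<Rightarrow> 'x" and M :: "'x measure"
    and b :: "'g \<Rightarrow> 'y::polish_space \<Rightarrow> 'y" and N :: "'y measure"
    and c :: "'g \<Rightarrow> 'z::polish_space \<Rightarrow> 'z" and T :: "'z measure"
    and a1 :: "'g \<Rightarrow> 'x1::polish_space \<Rightarrow> 'x1" and M1 :: "'x1 measure"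
    and a2 :: "'g \<Rightarrow> 'x2::polish_space \<Rightarrow> 'x2" and M2 :: "'x2 measure"
    and b1 :: "'g \<Rightarrow> 'y1::polish_space \<Rightarrow> 'y1" and N1 :: "'y1 measure"
    and b2 :: "'g \<Rightarrow> 'y2::polish_space \<Rightarrow> 'y2" and N2 :: "'y2 measure"
  assumes X: "mp_action a M" and Y: "mp_action b N" and Z: "mp_action c T"
    and X1: "mp_action a1 M1" and X2: "mp_action a2 M2"
    and Y1: "mp_action b1 N1" and Y2: "mp_action b2 N2"
  shows
    "(proj_contained a M b N \<and> proj_contained b N c T \<longrightarrow> proj_contained a M c T) \<and>
     (inf_contained a M b N \<and> proj_contained b N c T \<longrightarrow> inf_contained a M c T) \<and>
     (weakly_contained a M b N \<and> inf_contained b N c T \<longrightarrow> inf_contained a M c T) \<and>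
     (ergodic_action a M \<and> emeasure M (space M) = \<infinity> \<and> prob_space N \<and>
        proj_contained a M b N \<and> inf_contained b N c T \<longrightarrow> proj_contained a M c T) \<and>
     (proj_contained a1 M1 b1 N1 \<and> proj_contained a2 M2 b2 N2 \<longrightarrow>
        proj_contained (diag_action a1 a2) (M1 \<Otimes>\<^sub>M M2) (diag_action b1 b2) (N1 \<Otimes>\<^sub>M N2))"
proof -
  note mpa = mp_action_imp_measure_preserving_action
  have a0: "a 0 = id" and b0: "b 0 = id"
    using measure_preserving_action.act_zero[OF mpa[OF X]] measure_preserving_action.act_zero[OF mpa[OF Y]] .
  show ?thesis
    using proj_contained_trans[where a = a and b = b, OF a0 b0]
      inf_contained_proj_contained_trans[where a = a and b = b, OF a0 b0]
      weakly_contained_inf_contained_trans[where a = a and b = b, OF a0 b0]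
      proj_contained_inf_contained_trans_of_infinite[OF mpa[OF X] mpa[OF Y]]
      proj_contained_diag[OF mpa[OF X1] mpa[OF X2] mpa[OF Y1] mpa[OF Y2]]
    by blast
qed

end
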